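(* For every $n\ge 0$, the real Clifford group $\mathcal{C}_n$ has exactly $2\cdot\prod_{i=1}^{n}(4^{i}+2^{i}-2)(2\cdot 4^{i-1})$ elements.
   Context: $X=\begin{bmatrix}0&1\\1&0\end{bmatrix}$, $Z=\begin{bmatrix}1&0\\0&-1\end{bmatrix}$. The real Pauli group on $n$ qubits is $\mathcal{P}_n=\{\pm(P_1\otimes\cdots\otimes P_n)\mid P_i\in\{I,X,Z,XZ\}\}$. The real Clifford group (group of real stabilizer operators) on $n$ qubits is the normalizer of $\mathcal{P}_n$ in the orthogonal group: $\mathcal{C}_n=\{U\in O(2^n)\mid UPU^{-1}\in\mathcal{P}_n \text{ for all } P\in\mathcal{P}_n\}$. *)

theory Defs
  imports "Jordan_Normal_Form.Matrix"
begin

definition kron_mat :: "real mat \<Rightarrow> real mat \<Rightarrow> real mat" where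
  "kron_mat A B = mat (dim_row A * dim_row B) (dim_col A * dim_col B)
     (\<lambda>(i,j). A $$ (i div dim_row B, j div dim_col B) * B $$ (i mod dim_row B, j mod dim_col B))"

definition pauli_X :: "real mat" where
  "pauli_X = mat_of_rows_list 2 [[0,1],[1,0]]"

definition pauli_Z :: "real mat" where
  "pauli_Z = mat_of_rows_list 2 [[1,0],[0,-1]]"

definition pauli1 :: "real mat set" where
  "pauli1 = {1\<^sub>m 2, pauli_X, pauli_Z, pauli_X * pauli_Z}"

definition tensor_list :: "real mat list \<Rightarrow> real mat" where
  "tensor_list Ps = foldr kron_mat Ps (1\<^sub>m 1)"

definition real_pauli_group :: "nat \<Rightarrow> real mat set" where
  "real_pauli_group n = {s \<cdot>\<^sub>m tensor_list Ps | s Ps.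
      s \<in> {1, -1} \<and> length Ps = n \<and> set Ps \<subseteq> pauli1}"

definition orth_group :: "nat \<Rightarrow> real mat set" where
  "orth_group N = {U. U \<in> carrier_mat N N \<and> transpose_mat U * U = 1\<^sub>m N}"

text \<open>Real Clifford group: normalizer of the Pauli group in O(2^n);
  for orthogonal U, the inverse is its transpose.\<close>
definition real_clifford_group :: "nat \<Rightarrow> real mat set" where
  "real_clifford_group n = {U. U \<in> orth_group (2^n) \<and>
      (\<forall>P \<in> real_pauli_group n. U * P * transpose_mat U \<in> real_pauli_group n)}"

end

theory Submission
  imports Defs "Jordan_Normal_Form.Determinant"
begin

text \<open>
  Conjugation by a Clifford matrix \<open>U\<close> on \<open>n + 1\<close> qubits sends the pair
  \<open>(Z\<^sub>1, X\<^sub>1) = (Z \<otimes> I, X \<otimes> I)\<close> to a pair \<open>(A, B)\<close> of symmetric Pauli matrices with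
  \<open>A \<noteq> \<plusminus>I\<close> and \<open>AB = -BA\<close>. Every such pair arises: Hadamard and controlled-Pauli gates
  move \<open>Z\<^sub>1\<close> to any admissible \<open>A\<close>, and the partners of \<open>Z\<^sub>1\<close> are the matrices
  \<open>X \<otimes> P\<close> (\<open>P\<close> symmetric) and \<open>XZ \<otimes> P\<close> (\<open>P\<close> antisymmetric), all reached from \<open>X\<^sub>1\<close>
  by controlled-\<open>P\<close> gates, which fix \<open>Z\<^sub>1\<close>. The Clifford matrices fixing both \<open>Z\<^sub>1\<close> and \<open>X\<^sub>1\<close>
  commute with them, hence are \<open>I \<otimes> V\<close> with \<open>V \<in> C\<^sub>n\<close>. By orbit counting,
  \<open>|C\<^sub>n\<^sub>+\<^sub>1| = (4\<^sup>n\<^sup>+\<^sup>1 + 2\<^sup>n\<^sup>+\<^sup>1 - 2) \<cdot> 2 \<cdot> 4\<^sup>n \<cdot> |C\<^sub>n|\<close>, where the first factor counts the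
  symmetric Pauli matrices other than \<open>\<plusminus>I\<close> and \<open>2 \<cdot> 4\<^sup>n\<close> is the number of partners of each.
\<close>

lemma sum_atLeast0_lessThan_2: "(\<Sum>i = (0::nat)..<2. f i) = f 0 + (f 1 :: 'a::comm_monoid_add)"
  by (simp add: numeral_2_eq_2)

lemma div_mod_less_mult:
  assumes "(i::nat) < a * b"
  shows "i div b < a" "i mod b < b"
proof -
  from assms have "b > 0" by (cases b) auto
  then show "i mod b < b" by simp
  show "i div b < a" using assms by (simp add: less_mult_imp_div_less)
qed

lemma dim_kron_mat [simp]:
  "dim_row (kron_mat A B) = dim_row A * dim_row B"
  "dim_col (kron_mat A B) = dim_col A * dim_col B"
  by (simp_all add: kron_mat_def)

lemma index_kron_mat:
  "i < dim_row A * dim_row B \<Longrightarrow> j < dim_col A * dim_col B \<Longrightarrow>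
   kron_mat A B $$ (i, j) = A $$ (i div dim_row B, j div dim_col B) * B $$ (i mod dim_row B, j mod dim_col B)"
  by (simp add: kron_mat_def)

lemma kron_mat_carrier [simp]:
  "A \<in> carrier_mat a b \<Longrightarrow> B \<in> carrier_mat c d \<Longrightarrow> kron_mat A B \<in> carrier_mat (a * c) (b * d)"
  unfolding carrier_mat_def by auto

lemma index_kron_mat_block:
  assumes A: "A \<in> carrier_mat a b" and B: "B \<in> carrier_mat c d"
    and "i < a" "j < b" "k < c" "l < d"
  shows "kron_mat A B $$ (i * c + k, j * d + l) = A $$ (i, j) * B $$ (k, l)"
proof -
  have "i * c + k < Suc i * c" "j * d + l < Suc j * d" using assms by simp_all
  moreover have "Suc i * c \<le> a * c" "Suc j * d \<le> b * d"
    using assms mult_le_mono1[of "Suc i" a c] mult_le_mono1[of "Suc j" b d] by simp_all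
  ultimately have "i * c + k < a * c" "j * d + l < b * d" by linarith+
  then show ?thesis using assms by (simp add: kron_mat_def)
qed

lemma transpose_kron_mat: "transpose_mat (kron_mat A B) = kron_mat (transpose_mat A) (transpose_mat B)"
  by (rule eq_matI) (auto simp: kron_mat_def div_mod_less_mult)

lemma kron_mat_smult_right: "kron_mat A (c \<cdot>\<^sub>m B) = c \<cdot>\<^sub>m kron_mat A B"
  by (rule eq_matI) (auto simp: kron_mat_def div_mod_less_mult)

lemma kron_mat_uminus_left: "kron_mat (- A) B = - kron_mat A B"
  by (rule eq_matI) (auto simp: kron_mat_def div_mod_less_mult)

lemma kron_mat_uminus_right: "kron_mat A (- B) = - kron_mat A B"
  by (rule eq_matI) (auto simp: kron_mat_def div_mod_less_mult)

lemma kron_mat_one: "kron_mat (1\<^sub>m a) (1\<^sub>m b) = 1\<^sub>m (a * b)"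
proof (rule eq_matI)
  fix i j assume "i < dim_row (1\<^sub>m (a * b) :: real mat)" "j < dim_col (1\<^sub>m (a * b) :: real mat)"
  then have ij: "i < a * b" "j < a * b" by auto
  have "(i div b = j div b \<and> i mod b = j mod b) = (i = j)"
    by (metis div_mult_mod_eq)
  moreover have "i div b < a" "j div b < a" using ij by (simp_all add: div_mod_less_mult)
  moreover have "b > 0" using ij by (cases b) auto
  ultimately show "kron_mat (1\<^sub>m a) (1\<^sub>m b) $$ (i, j) = 1\<^sub>m (a * b) $$ (i, j)"
    using ij by (auto simp: kron_mat_def)
qed auto

lemma kron_mat_cancel_left:
  assumes A: "A \<in> carrier_mat a b" "i < a" "j < b" "A $$ (i, j) \<noteq> 0"
    and B: "B \<in> carrier_mat c d" "B' \<in> carrier_mat c d"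
    and eq: "kron_mat A B = kron_mat A B'"
  shows "B = B'"
proof (rule eq_matI)
  fix k l assume "k < dim_row B'" "l < dim_col B'"
  then have kl: "k < c" "l < d" using B by auto
  have "A $$ (i, j) * B $$ (k, l) = A $$ (i, j) * B' $$ (k, l)"
    using index_kron_mat_block[OF A(1) B(1) A(2,3) kl] index_kron_mat_block[OF A(1) B(2) A(2,3) kl] eq
    by metis
  then show "B $$ (k, l) = B' $$ (k, l)" using A(4) by simp
qed (use B in auto)

text \<open>The mixed-product rule is only needed for a 2\<times>2 left factor, where the Kronecker product
  is a block matrix and the rule reduces to block multiplication.\<close>

lemma kron_mat_four_block:
  assumes Q: "Q \<in> carrier_mat 2 2" and P: "P \<in> carrier_mat N N"
  shows "kron_mat Q P = four_block_mat (Q $$ (0,0) \<cdot>\<^sub>m P) (Q $$ (0,1) \<cdot>\<^sub>m P) (Q $$ (1,0) \<cdot>\<^sub>m P) (Q $$ (1,1) \<cdot>\<^sub>m P)"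
    (is "_ = ?F")
proof (rule eq_matI)
  fix i j assume "i < dim_row ?F" "j < dim_col ?F"
  then have ij: "i < 2 * N" "j < 2 * N" using P by auto
  have d: "i div N = (if i < N then 0 else 1)" "i mod N = (if i < N then i else i - N)"
       "j div N = (if j < N then 0 else 1)" "j mod N = (if j < N then j else j - N)"
    using ij by (auto simp: div_if mod_if)
  show "kron_mat Q P $$ (i, j) = ?F $$ (i, j)"
    using ij Q P by (subst index_kron_mat) (auto simp: d)
qed (use Q P in auto)

lemma kron_mat_mult:
  assumes Q: "Q \<in> carrier_mat 2 2" "Q' \<in> carrier_mat 2 2"
    and P: "P \<in> carrier_mat N N" "P' \<in> carrier_mat N N"
  shows "kron_mat Q P * kron_mat Q' P' = kron_mat (Q * Q') (P * P')"
proof -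
  have QQ: "Q * Q' \<in> carrier_mat 2 2" and PP: "P * P' \<in> carrier_mat N N" using Q P by auto
  have blocks: "(a \<cdot>\<^sub>m P) * (b \<cdot>\<^sub>m P') + (c \<cdot>\<^sub>m P) * (d \<cdot>\<^sub>m P') = (a * b + c * d) \<cdot>\<^sub>m (P * P')" for a b c d
    using P by (intro eq_matI) (auto simp: algebra_simps)
  have entries: "(Q * Q') $$ (i,j) = Q $$ (i,0) * Q' $$ (0,j) + Q $$ (i,1) * Q' $$ (1,j)" if "i < 2" "j < 2" for i j
    using Q that by (auto simp: scalar_prod_def sum_atLeast0_lessThan_2)
  show ?thesis
    unfolding kron_mat_four_block[OF Q(1) P(1)] kron_mat_four_block[OF Q(2) P(2)] kron_mat_four_block[OF QQ PP]
    by (subst mult_four_block_mat[of _ N N _ N _ N _ _ N _ N]) (use P in \<open>auto simp: blocks entries\<close>)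
qed

lemma smult_mat_sign:
  "(1::real) \<cdot>\<^sub>m A = A" "(-1::real) \<cdot>\<^sub>m A = - A" "A \<in> carrier_mat n m \<Longrightarrow> (0::real) \<cdot>\<^sub>m A = 0\<^sub>m n m"
  by (auto intro!: eq_matI)

lemma orth_groupD:
  "U \<in> orth_group N \<Longrightarrow> U \<in> carrier_mat N N"
  "U \<in> orth_group N \<Longrightarrow> transpose_mat U * U = 1\<^sub>m N"
  by (simp_all add: orth_group_def)

lemma orth_group_mult_transpose: "U \<in> orth_group N \<Longrightarrow> U * transpose_mat U = 1\<^sub>m N"
  using mat_mult_left_right_inverse[of "transpose_mat U" N U] by (auto simp: orth_group_def)

lemma orth_group_nonzero_entry:
  assumes "U \<in> orth_group N" "0 < N"
  shows "\<exists>i<N. \<exists>j<N. U $$ (i, j) \<noteq> 0"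
proof (rule ccontr)
  assume "\<not> ?thesis"
  then have "U = 0\<^sub>m N N" using orth_groupD(1)[OF assms(1)] by (intro eq_matI) auto
  then have "(1\<^sub>m N :: real mat) = 0\<^sub>m N N" using orth_groupD(2)[OF assms(1)] by simp
  then have "(1\<^sub>m N :: real mat) $$ (0, 0) = 0\<^sub>m N N $$ (0, 0)" by simp
  with \<open>0 < N\<close> show False by simp
qed

lemma orth_group_neq_uminus:
  assumes "U \<in> orth_group N" "0 < N"
  shows "U \<noteq> - U"
proof
  assume eq: "U = - U"
  obtain i j where ij: "i < N" "j < N" "U $$ (i, j) \<noteq> 0" using orth_group_nonzero_entry[OF assms] by blast
  have "U $$ (i, j) = (- U) $$ (i, j)" using eq by simp
  also have "\<dots> = - U $$ (i, j)" using ij orth_groupD(1)[OF assms(1)] by simp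
  finally show False using ij(3) by simp
qed

lemma kron_mat_orth:
  assumes "Q \<in> orth_group 2" "V \<in> orth_group N"
  shows "kron_mat Q V \<in> orth_group (2 * N)"
proof -
  have "transpose_mat (kron_mat Q V) * kron_mat Q V = kron_mat (transpose_mat Q * Q) (transpose_mat V * V)"
    unfolding transpose_kron_mat using assms by (intro kron_mat_mult) (auto dest: orth_groupD)
  then show ?thesis using assms by (simp add: orth_group_def kron_mat_one)
qed

lemma square_mat_simps:
  fixes A B C :: "real mat"
  shows "A \<in> carrier_mat N N \<Longrightarrow> B \<in> carrier_mat N N \<Longrightarrow> A * B \<in> carrier_mat N N"
  "A \<in> carrier_mat N N \<Longrightarrow> transpose_mat A \<in> carrier_mat N N"
  "A \<in> carrier_mat N N \<Longrightarrow> - A \<in> carrier_mat N N"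
  "A \<in> carrier_mat N N \<Longrightarrow> B \<in> carrier_mat N N \<Longrightarrow> C \<in> carrier_mat N N \<Longrightarrow> A * B * C = A * (B * C)"
  "A \<in> carrier_mat N N \<Longrightarrow> B \<in> carrier_mat N N \<Longrightarrow> transpose_mat (A * B) = transpose_mat B * transpose_mat A"
  "A \<in> carrier_mat N N \<Longrightarrow> B \<in> carrier_mat N N \<Longrightarrow> - A * B = - (A * B)"
  "A \<in> carrier_mat N N \<Longrightarrow> B \<in> carrier_mat N N \<Longrightarrow> A * - B = - (A * B)"
  "A \<in> carrier_mat N N \<Longrightarrow> 1\<^sub>m N * A = A"
  "A \<in> carrier_mat N N \<Longrightarrow> A * 1\<^sub>m N = A"
  by (auto intro: assoc_mult_mat transpose_mult left_mult_one_mat right_mult_one_mat)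

lemmas assoc_mult_square = square_mat_simps(4)

lemma orth_group_mult: "U \<in> orth_group N \<Longrightarrow> V \<in> orth_group N \<Longrightarrow> U * V \<in> orth_group N"
  unfolding orth_group_def
  by (simp add: square_mat_simps[where N = N] flip: assoc_mult_square[where N = N, of "transpose_mat U"])

lemma orth_group_transpose: "U \<in> orth_group N \<Longrightarrow> transpose_mat U \<in> orth_group N"
  using orth_group_mult_transpose[of U N] by (simp add: orth_group_def)

lemma conj_conj_mat:
  fixes U :: "real mat"
  assumes "U \<in> carrier_mat N N" "V \<in> carrier_mat N N" "A \<in> carrier_mat N N"
  shows "(U * V) * A * transpose_mat (U * V) = U * (V * A * transpose_mat V) * transpose_mat U"
  using assms by (simp add: square_mat_simps[where N = N])

lemma conj_mat_mult:
  assumes "U \<in> orth_group N" "A \<in> carrier_mat N N" "B \<in> carrier_mat N N"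
  shows "(U * A * transpose_mat U) * (U * B * transpose_mat U) = U * (A * B) * transpose_mat U"
proof -
  have U: "U \<in> carrier_mat N N" "transpose_mat U * U = 1\<^sub>m N" using assms(1) by (auto dest: orth_groupD)
  have "(U * A * transpose_mat U) * (U * B * transpose_mat U) = U * A * (transpose_mat U * U) * B * transpose_mat U"
    using U(1) assms(2,3) by (simp add: square_mat_simps[where N = N])
  then show ?thesis using U assms(2,3) by (simp add: square_mat_simps[where N = N])
qed

lemma conj_mat_uminus:
  fixes U :: "real mat"
  shows "U \<in> carrier_mat N N \<Longrightarrow> A \<in> carrier_mat N N \<Longrightarrow> U * (- A) * transpose_mat U = - (U * A * transpose_mat U)"
  by (simp add: square_mat_simps[where N = N])

lemma transpose_conj_mat:
  fixes U :: "real mat"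
  shows "U \<in> carrier_mat N N \<Longrightarrow> A \<in> carrier_mat N N \<Longrightarrow>
   transpose_mat (U * A * transpose_mat U) = U * transpose_mat A * transpose_mat U"
  by (simp add: square_mat_simps[where N = N])

lemma conj_mat_one: "U \<in> orth_group N \<Longrightarrow> U * 1\<^sub>m N * transpose_mat U = 1\<^sub>m N"
  using orth_group_mult_transpose[of U N] orth_groupD(1)[of U N] by (simp add: square_mat_simps[where N = N])

lemma conj_mat_cancel:
  assumes "U \<in> orth_group N" "A \<in> carrier_mat N N"
  shows "transpose_mat U * (U * A * transpose_mat U) * U = A"
proof -
  have U: "U \<in> carrier_mat N N" "transpose_mat U * U = 1\<^sub>m N" using assms(1) by (auto dest: orth_groupD)
  have "transpose_mat U * (U * A * transpose_mat U) * U = (transpose_mat U * U) * A * (transpose_mat U * U)"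
    using U(1) assms(2) by (simp add: square_mat_simps[where N = N])
  then show ?thesis using U assms(2) by (simp add: square_mat_simps[where N = N])
qed

lemma inj_on_conj_mat:
  assumes "U \<in> orth_group N"
  shows "inj_on (\<lambda>A. U * A * transpose_mat U) (carrier_mat N N)"
  by (rule inj_onI) (metis assms conj_mat_cancel)

lemma commute_if_conj_mat_fixed:
  assumes "U \<in> orth_group N" "A \<in> carrier_mat N N" "U * A * transpose_mat U = A"
  shows "U * A = A * U"
proof -
  have U: "U \<in> carrier_mat N N" "transpose_mat U * U = 1\<^sub>m N" using assms(1) by (auto dest: orth_groupD)
  have "A * U = U * A * transpose_mat U * U" using assms(3) by simp
  also have "\<dots> = U * A * (transpose_mat U * U)" using U(1) assms(2) by (simp add: square_mat_simps[where N = N])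
  finally show ?thesis using U assms(2) by (simp add: square_mat_simps[where N = N])
qed

lemma conj_kron_mat:
  assumes "Q \<in> carrier_mat 2 2" "Q' \<in> carrier_mat 2 2" "V \<in> carrier_mat N N" "R \<in> carrier_mat N N"
  shows "kron_mat Q V * kron_mat Q' R * transpose_mat (kron_mat Q V)
    = kron_mat (Q * Q' * transpose_mat Q) (V * R * transpose_mat V)"
  using assms by (simp add: transpose_kron_mat kron_mat_mult[where N = N])

text \<open>The real counterpart of \<open>Y\<close> is \<open>XZ = -iY\<close>.\<close>

definition pauli_Y :: "real mat" where
  "pauli_Y = pauli_X * pauli_Z"

lemma less_2_cases: "(i::nat) < 2 \<Longrightarrow> i = 0 \<or> i = 1"
  by auto

lemma pauli_X_mat: "pauli_X = mat 2 2 (\<lambda>(i,j). if i = j then 0 else 1)"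
  unfolding pauli_X_def mat_of_rows_list_def by (rule eq_matI) (auto dest!: less_2_cases)

lemma pauli_Z_mat: "pauli_Z = mat 2 2 (\<lambda>(i,j). if i = j then (if i = 0 then 1 else -1) else 0)"
  unfolding pauli_Z_def mat_of_rows_list_def by (rule eq_matI) (auto dest!: less_2_cases)

lemma pauli_Y_mat: "pauli_Y = mat 2 2 (\<lambda>(i,j). if i = j then 0 else (if i = 0 then -1 else 1))"
  unfolding pauli_Y_def pauli_X_mat pauli_Z_mat
  by (rule eq_matI) (auto dest!: less_2_cases simp: scalar_prod_def sum_atLeast0_lessThan_2)

lemmas pauli_mats = pauli_X_mat pauli_Z_mat pauli_Y_mat

lemma pauli_carrier [simp]:
  "pauli_X \<in> carrier_mat 2 2" "pauli_Z \<in> carrier_mat 2 2" "pauli_Y \<in> carrier_mat 2 2"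
  by (simp_all add: pauli_mats)

lemma dim_pauli [simp]:
  "dim_row pauli_X = 2" "dim_col pauli_X = 2" "dim_row pauli_Z = 2" "dim_col pauli_Z = 2"
  "dim_row pauli_Y = 2" "dim_col pauli_Y = 2"
  by (simp_all add: pauli_mats)

lemma pauli_mult:
  "pauli_X * pauli_X = 1\<^sub>m 2" "pauli_Z * pauli_Z = 1\<^sub>m 2" "pauli_Y * pauli_Y = - 1\<^sub>m 2"
  "pauli_X * pauli_Z = pauli_Y" "pauli_Z * pauli_X = - pauli_Y"
  "pauli_X * pauli_Y = pauli_Z" "pauli_Y * pauli_X = - pauli_Z"
  "pauli_Z * pauli_Y = - pauli_X" "pauli_Y * pauli_Z = pauli_X"
  by (simp_all only: pauli_Y_def[symmetric])
    (unfold pauli_mats; rule eq_matI; auto dest!: less_2_cases simp: scalar_prod_def sum_atLeast0_lessThan_2)+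

lemma transpose_pauli:
  "transpose_mat pauli_X = pauli_X" "transpose_mat pauli_Z = pauli_Z" "transpose_mat pauli_Y = - pauli_Y"
  by (unfold pauli_mats; rule eq_matI; auto)+

lemma pauli1_eq: "pauli1 = {1\<^sub>m 2, pauli_X, pauli_Z, pauli_Y}"
  unfolding pauli1_def pauli_Y_def ..

lemma pauli1_distinct:
  "1\<^sub>m 2 \<noteq> pauli_X" "1\<^sub>m 2 \<noteq> pauli_Z" "1\<^sub>m 2 \<noteq> pauli_Y"
  "pauli_X \<noteq> pauli_Z" "pauli_X \<noteq> pauli_Y" "pauli_Z \<noteq> pauli_Y"
proof -
  have "(1\<^sub>m 2 :: real mat) $$ (0,0) = 1" "pauli_X $$ (0,0) = 0" "pauli_Z $$ (0,0) = 1" "pauli_Y $$ (0,0) = 0"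
    "pauli_X $$ (0,1) = 1" "pauli_Y $$ (0,1) = -1" "pauli_Z $$ (1,1) = -1" "(1\<^sub>m 2 :: real mat) $$ (1,1) = 1"
    by (auto simp: pauli_mats)
  then show "1\<^sub>m 2 \<noteq> pauli_X" "1\<^sub>m 2 \<noteq> pauli_Z" "1\<^sub>m 2 \<noteq> pauli_Y"
    "pauli_X \<noteq> pauli_Z" "pauli_X \<noteq> pauli_Y" "pauli_Z \<noteq> pauli_Y"
    by (metis zero_neq_one one_neq_neg_one)+
qed

lemma card_pauli1: "card pauli1 = 4"
  unfolding pauli1_eq using pauli1_distinct by auto

lemma pauli1_carrier: "Q \<in> pauli1 \<Longrightarrow> Q \<in> carrier_mat 2 2"
  unfolding pauli1_eq by auto

lemma pauli1_transpose: "Q \<in> pauli1 \<Longrightarrow> transpose_mat Q = Q \<or> transpose_mat Q = - Q"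
  unfolding pauli1_eq using transpose_pauli by auto

lemma pauli1_orth: "Q \<in> pauli1 \<Longrightarrow> Q \<in> orth_group 2"
  unfolding pauli1_eq orth_group_def using transpose_pauli pauli_mult by auto

lemma transpose_pauli_Y_neq: "transpose_mat pauli_Y \<noteq> pauli_Y"
  using transpose_pauli(3) orth_group_neq_uminus[OF pauli1_orth, of pauli_Y] by (auto simp: pauli1_eq)

lemma pauli1_mult: "Q \<in> pauli1 \<Longrightarrow> Q' \<in> pauli1 \<Longrightarrow> \<exists>Q''\<in>pauli1. Q * Q' = Q'' \<or> Q * Q' = - Q''"
  unfolding pauli1_eq using pauli_mult by auto

lemma pauli1_commute_or_anticommute:
  "Q \<in> pauli1 \<Longrightarrow> Q' \<in> pauli1 \<Longrightarrow> Q * Q' = Q' * Q \<or> Q * Q' = - (Q' * Q)"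
  unfolding pauli1_eq using pauli_mult by auto

lemma pauli1_anticommuting_partner: "Q \<in> pauli1 \<Longrightarrow> Q \<noteq> 1\<^sub>m 2 \<Longrightarrow> \<exists>Q'\<in>pauli1. Q * Q' = - (Q' * Q)"
  unfolding pauli1_eq using pauli_mult by (auto intro: bexI[of _ pauli_X] bexI[of _ pauli_Z])

lemma pauli1_eq_if_proportional:
  assumes "Q \<in> pauli1" "Q' \<in> pauli1" "(c::real) \<noteq> 0"
    and proportional: "\<And>i j. i < 2 \<Longrightarrow> j < 2 \<Longrightarrow> Q $$ (i,j) * c = Q' $$ (i,j) * d"
  shows "Q = Q'"
proof -
  have "Q $$ (0,0) * c = Q' $$ (0,0) * d" "Q $$ (0,1) * c = Q' $$ (0,1) * d"
    "Q $$ (1,0) * c = Q' $$ (1,0) * d" "Q $$ (1,1) * c = Q' $$ (1,1) * d"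
    by (rule proportional; simp)+
  then show ?thesis using assms(1-3) unfolding pauli1_eq by (elim insertE emptyE) (simp_all add: pauli_mats)
qed

lemma kron_mat_pauli_four_block:
  assumes "R \<in> carrier_mat N N"
  shows "kron_mat (1\<^sub>m 2) R = four_block_mat R (0\<^sub>m N N) (0\<^sub>m N N) R"
    and "kron_mat pauli_X R = four_block_mat (0\<^sub>m N N) R R (0\<^sub>m N N)"
    and "kron_mat pauli_Z R = four_block_mat R (0\<^sub>m N N) (0\<^sub>m N N) (- R)"
    and "kron_mat pauli_Y R = four_block_mat (0\<^sub>m N N) (- R) R (0\<^sub>m N N)"
  using assms by (subst kron_mat_four_block[where N = N]; simp add: smult_mat_sign pauli_mats)+

lemma tensor_list_Cons: "tensor_list (Q # Ps) = kron_mat Q (tensor_list Ps)"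
  unfolding tensor_list_def by simp

lemma real_pauli_group_0: "real_pauli_group 0 = {1\<^sub>m 1, - 1\<^sub>m 1}"
  unfolding real_pauli_group_def tensor_list_def
  by (auto simp: smult_mat_sign intro: exI[of _ 1] exI[of _ "-1"])

lemma real_pauli_group_Suc:
  "real_pauli_group (Suc n) = {kron_mat Q P | Q P. Q \<in> pauli1 \<and> P \<in> real_pauli_group n}"
proof safe
  fix M assume "M \<in> real_pauli_group (Suc n)"
  then obtain s Ps where s: "s \<in> {1,-1}" and l: "length Ps = Suc n" and Ps: "set Ps \<subseteq> pauli1"
    and M: "M = s \<cdot>\<^sub>m tensor_list Ps" unfolding real_pauli_group_def by auto
  from l obtain Q Ps' where Ps': "Ps = Q # Ps'" by (cases Ps) auto
  have "M = kron_mat Q (s \<cdot>\<^sub>m tensor_list Ps')" using M Ps' by (simp add: tensor_list_Cons kron_mat_smult_right)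
  moreover have "s \<cdot>\<^sub>m tensor_list Ps' \<in> real_pauli_group n"
    unfolding real_pauli_group_def using s l Ps Ps' by auto
  ultimately show "\<exists>Q P. M = kron_mat Q P \<and> Q \<in> pauli1 \<and> P \<in> real_pauli_group n"
    using Ps Ps' by auto
next
  fix Q P assume Q: "Q \<in> pauli1" and "P \<in> real_pauli_group n"
  then obtain s Ps where s: "s \<in> {1,-1}" and l: "length Ps = n" and Ps: "set Ps \<subseteq> pauli1"
    and P: "P = s \<cdot>\<^sub>m tensor_list Ps" unfolding real_pauli_group_def by auto
  have "kron_mat Q P = s \<cdot>\<^sub>m tensor_list (Q # Ps)" using P by (simp add: tensor_list_Cons kron_mat_smult_right)
  then show "kron_mat Q P \<in> real_pauli_group (Suc n)"
    unfolding real_pauli_group_def using s l Ps Q by fastforce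
qed

lemma kron_mat_in_real_pauli_group:
  "Q \<in> pauli1 \<Longrightarrow> P \<in> real_pauli_group n \<Longrightarrow> kron_mat Q P \<in> real_pauli_group (Suc n)"
  unfolding real_pauli_group_Suc by blast

lemma real_pauli_group_SucE:
  assumes "M \<in> real_pauli_group (Suc n)"
  obtains Q P where "Q \<in> pauli1" "P \<in> real_pauli_group n" "M = kron_mat Q P"
  using assms unfolding real_pauli_group_Suc by blast

lemma real_pauli_group_orth_and_transpose:
  "P \<in> real_pauli_group n \<Longrightarrow> P \<in> orth_group (2^n) \<and> (transpose_mat P = P \<or> transpose_mat P = - P)"
proof (induction n arbitrary: P)
  case 0
  then show ?case by (auto simp: real_pauli_group_0 orth_group_def transpose_uminus)
next
  case (Suc n)
  then obtain Q R where Q: "Q \<in> pauli1" and R: "R \<in> real_pauli_group n" and P: "P = kron_mat Q R"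
    by (elim real_pauli_group_SucE)
  have R': "R \<in> orth_group (2^n)" "transpose_mat R = R \<or> transpose_mat R = - R" using Suc.IH[OF R] by auto
  have "P \<in> orth_group (2^Suc n)" unfolding P using kron_mat_orth[OF pauli1_orth[OF Q] R'(1)] by simp
  moreover have "transpose_mat P = P \<or> transpose_mat P = - P"
    unfolding P transpose_kron_mat using pauli1_transpose[OF Q] R'(2)
    by (auto simp: kron_mat_uminus_left kron_mat_uminus_right)
  ultimately show ?case by blast
qed

lemma real_pauli_group_orth: "P \<in> real_pauli_group n \<Longrightarrow> P \<in> orth_group (2^n)"
  using real_pauli_group_orth_and_transpose by blast

lemma real_pauli_group_carrier: "P \<in> real_pauli_group n \<Longrightarrow> P \<in> carrier_mat (2^n) (2^n)"
  using real_pauli_group_orth orth_groupD(1) by blast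

lemma real_pauli_group_transpose:
  "P \<in> real_pauli_group n \<Longrightarrow> transpose_mat P = P \<or> transpose_mat P = - P"
  using real_pauli_group_orth_and_transpose by blast

lemma real_pauli_group_neq_uminus: "P \<in> real_pauli_group n \<Longrightarrow> P \<noteq> - P"
  using orth_group_neq_uminus[OF real_pauli_group_orth] by simp

lemma real_pauli_group_uminus: "P \<in> real_pauli_group n \<Longrightarrow> - P \<in> real_pauli_group n"
proof -
  assume "P \<in> real_pauli_group n"
  then obtain s Ps where s: "s \<in> {1,-1}" and l: "length Ps = n" and Ps: "set Ps \<subseteq> pauli1"
    and P: "P = s \<cdot>\<^sub>m tensor_list Ps" unfolding real_pauli_group_def by auto
  have "- P = (- s) \<cdot>\<^sub>m tensor_list Ps" using P by (intro eq_matI) auto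
  then show ?thesis unfolding real_pauli_group_def using s l Ps by force
qed

lemma one_in_real_pauli_group: "1\<^sub>m (2^n) \<in> real_pauli_group n"
proof (induction n)
  case 0
  then show ?case by (simp add: real_pauli_group_0)
next
  case (Suc n)
  then have "kron_mat (1\<^sub>m 2) (1\<^sub>m (2^n)) \<in> real_pauli_group (Suc n)"
    by (intro kron_mat_in_real_pauli_group) (auto simp: pauli1_eq)
  then show ?case by (simp add: kron_mat_one)
qed

lemma real_pauli_group_mult:
  "P \<in> real_pauli_group n \<Longrightarrow> P' \<in> real_pauli_group n \<Longrightarrow> P * P' \<in> real_pauli_group n"
proof (induction n arbitrary: P P')
  case 0
  then show ?case by (auto simp: real_pauli_group_0)
next
  case (Suc n)
  obtain Q R where Q: "Q \<in> pauli1" and R: "R \<in> real_pauli_group n" and P: "P = kron_mat Q R"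
    using Suc.prems(1) by (elim real_pauli_group_SucE)
  obtain Q' R' where Q': "Q' \<in> pauli1" and R': "R' \<in> real_pauli_group n" and P': "P' = kron_mat Q' R'"
    using Suc.prems(2) by (elim real_pauli_group_SucE)
  obtain Q'' where Q'': "Q'' \<in> pauli1" "Q * Q' = Q'' \<or> Q * Q' = - Q''" using pauli1_mult[OF Q Q'] by blast
  have "P * P' = kron_mat (Q * Q') (R * R')" unfolding P P'
    using Q Q' R R' by (intro kron_mat_mult[where N = "2^n"]) (auto simp: pauli1_carrier real_pauli_group_carrier)
  moreover have "R * R' \<in> real_pauli_group n" "- (R * R') \<in> real_pauli_group n"
    using Suc.IH[OF R R'] real_pauli_group_uminus by auto
  ultimately show ?case using Q'' kron_mat_in_real_pauli_group
    by (auto simp: kron_mat_uminus_left kron_mat_uminus_right[symmetric])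
qed

lemma real_pauli_group_commute_or_anticommute:
  "P \<in> real_pauli_group n \<Longrightarrow> P' \<in> real_pauli_group n \<Longrightarrow> P * P' = P' * P \<or> P * P' = - (P' * P)"
proof (induction n arbitrary: P P')
  case 0
  then show ?case by (auto simp: real_pauli_group_0)
next
  case (Suc n)
  obtain Q R where Q: "Q \<in> pauli1" and R: "R \<in> real_pauli_group n" and P: "P = kron_mat Q R"
    using Suc.prems(1) by (elim real_pauli_group_SucE)
  obtain Q' R' where Q': "Q' \<in> pauli1" and R': "R' \<in> real_pauli_group n" and P': "P' = kron_mat Q' R'"
    using Suc.prems(2) by (elim real_pauli_group_SucE)
  have c: "Q \<in> carrier_mat 2 2" "Q' \<in> carrier_mat 2 2" "R \<in> carrier_mat (2^n) (2^n)" "R' \<in> carrier_mat (2^n) (2^n)"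
    using Q Q' R R' pauli1_carrier real_pauli_group_carrier by auto
  have "P * P' = kron_mat (Q * Q') (R * R')" "P' * P = kron_mat (Q' * Q) (R' * R)"
    unfolding P P' using c by (simp_all add: kron_mat_mult)
  then show ?case using pauli1_commute_or_anticommute[OF Q Q'] Suc.IH[OF R R']
    by (auto simp: kron_mat_uminus_left kron_mat_uminus_right)
qed

lemma real_pauli_group_conj:
  assumes P: "P \<in> real_pauli_group n" and R: "R \<in> real_pauli_group n"
  shows "P * R * transpose_mat P = (if P * R = R * P then R else - R)"
proof -
  have c: "P \<in> carrier_mat (2^n) (2^n)" "R \<in> carrier_mat (2^n) (2^n)" "P * transpose_mat P = 1\<^sub>m (2^n)"
    using P R by (auto simp: real_pauli_group_carrier orth_group_mult_transpose real_pauli_group_orth)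
  have RPP: "R * P * transpose_mat P = R" using c by (simp add: square_mat_simps[where N = "2^n"])
  show ?thesis
  proof (cases "P * R = R * P")
    case True
    then show ?thesis using RPP by simp
  next
    case False
    then have "P * R = - (R * P)" using real_pauli_group_commute_or_anticommute[OF P R] by blast
    then have "P * R * transpose_mat P = - (R * P * transpose_mat P)" by simp
    then show ?thesis using RPP False by simp
  qed
qed

lemma real_pauli_group_anticommuting_partner:
  assumes "P \<in> real_pauli_group n" "P \<noteq> 1\<^sub>m (2^n)" "P \<noteq> - 1\<^sub>m (2^n)"
  shows "\<exists>S\<in>real_pauli_group n. P * S = - (S * P)"
  using assms
proof (induction n arbitrary: P)
  case 0
  then show ?case by (auto simp: real_pauli_group_0)
next
  case (Suc n)
  obtain Q R where Q: "Q \<in> pauli1" and R: "R \<in> real_pauli_group n" and P: "P = kron_mat Q R"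
    using Suc.prems(1) by (elim real_pauli_group_SucE)
  have Qc: "Q \<in> carrier_mat 2 2" and Rc: "R \<in> carrier_mat (2^n) (2^n)"
    using Q R pauli1_carrier real_pauli_group_carrier by auto
  show ?case
  proof (cases "Q = 1\<^sub>m 2")
    case False
    then obtain Q' where Q': "Q' \<in> pauli1" "Q * Q' = - (Q' * Q)" using pauli1_anticommuting_partner[OF Q] by blast
    have "P * kron_mat Q' (1\<^sub>m (2^n)) = - (kron_mat Q' (1\<^sub>m (2^n)) * P)"
      unfolding P using Qc Rc Q' pauli1_carrier[OF Q'(1)]
      by (simp add: kron_mat_mult[where N = "2^n"] kron_mat_uminus_left)
    then show ?thesis using kron_mat_in_real_pauli_group[OF Q'(1) one_in_real_pauli_group] by blast
  next
    case True
    have "R \<noteq> 1\<^sub>m (2^n)" "R \<noteq> - 1\<^sub>m (2^n)"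
      using Suc.prems(2,3) P True by (auto simp: kron_mat_one kron_mat_uminus_right)
    then obtain S where S: "S \<in> real_pauli_group n" "R * S = - (S * R)" using Suc.IH[OF R] by blast
    have "P * kron_mat (1\<^sub>m 2) S = - (kron_mat (1\<^sub>m 2) S * P)"
      unfolding P True using Rc S real_pauli_group_carrier[OF S(1)]
      by (simp add: kron_mat_mult[where N = "2^n"] kron_mat_uminus_right)
    moreover have "kron_mat (1\<^sub>m 2) S \<in> real_pauli_group (Suc n)"
      using S(1) by (intro kron_mat_in_real_pauli_group) (auto simp: pauli1_eq)
    ultimately show ?thesis by blast
  qed
qed

lemma finite_real_pauli_group: "finite (real_pauli_group n)"
proof (induction n)
  case 0
  then show ?case by (simp add: real_pauli_group_0)
next
  case (Suc n)
  have "real_pauli_group (Suc n) = (\<lambda>(Q,P). kron_mat Q P) ` (pauli1 \<times> real_pauli_group n)"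
    unfolding real_pauli_group_Suc by auto
  then show ?case using Suc by (simp add: pauli1_def)
qed

lemma kron_mat_pauli1_cancel_left:
  assumes "Q \<in> pauli1" "P \<in> carrier_mat N N" "P' \<in> carrier_mat N N" "kron_mat Q P = kron_mat Q P'"
  shows "P = P'"
proof -
  obtain i j where "i < 2" "j < 2" "Q $$ (i, j) \<noteq> 0"
    using orth_group_nonzero_entry[OF pauli1_orth[OF assms(1)]] by auto
  then show ?thesis using kron_mat_cancel_left[OF pauli1_carrier] assms by blast
qed

lemma kron_mat_pauli_inj:
  assumes Q: "Q \<in> pauli1" "Q' \<in> pauli1" and P: "P \<in> real_pauli_group n" "P' \<in> carrier_mat (2^n) (2^n)"
    and eq: "kron_mat Q P = kron_mat Q' P'"
  shows "Q = Q' \<and> P = P'"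
proof -
  obtain k l where kl: "k < 2^n" "l < 2^n" "P $$ (k, l) \<noteq> 0"
    using orth_group_nonzero_entry[OF real_pauli_group_orth[OF P(1)]] by auto
  have Pc: "P \<in> carrier_mat (2^n) (2^n)" using real_pauli_group_carrier[OF P(1)] .
  have "Q $$ (i, j) * P $$ (k, l) = Q' $$ (i, j) * P' $$ (k, l)" if "i < 2" "j < 2" for i j
    using index_kron_mat_block[OF pauli1_carrier[OF Q(1)] Pc that kl(1,2)]
      index_kron_mat_block[OF pauli1_carrier[OF Q(2)] P(2) that kl(1,2)] eq by simp
  then have "Q = Q'" using pauli1_eq_if_proportional[OF Q kl(3)] by blast
  moreover from this have "P = P'" using kron_mat_pauli1_cancel_left[OF Q(1) Pc P(2)] eq by simp
  ultimately show ?thesis ..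
qed

lemma inj_on_kron_mat_pauli: "inj_on (\<lambda>(Q,P). kron_mat Q P) (pauli1 \<times> real_pauli_group n)"
  by (rule inj_onI) (auto dest: kron_mat_pauli_inj[OF _ _ _ real_pauli_group_carrier])

lemma card_real_pauli_group: "card (real_pauli_group n) = 2 * 4^n"
proof (induction n)
  case 0
  have "(1\<^sub>m 1 :: real mat) \<noteq> - 1\<^sub>m 1" using orth_group_neq_uminus[of "1\<^sub>m 1" 1] by (simp add: orth_group_def)
  then show ?case by (simp add: real_pauli_group_0)
next
  case (Suc n)
  have "real_pauli_group (Suc n) = (\<lambda>(Q,P). kron_mat Q P) ` (pauli1 \<times> real_pauli_group n)"
    unfolding real_pauli_group_Suc by auto
  then have "card (real_pauli_group (Suc n)) = card (pauli1 \<times> real_pauli_group n)"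
    using inj_on_kron_mat_pauli card_image by metis
  then show ?case using Suc card_pauli1 by (simp add: card_cartesian_product)
qed

abbreviation pauli_X1 :: "nat \<Rightarrow> real mat" where
  "pauli_X1 n \<equiv> kron_mat pauli_X (1\<^sub>m (2^n))"

abbreviation pauli_Z1 :: "nat \<Rightarrow> real mat" where
  "pauli_Z1 n \<equiv> kron_mat pauli_Z (1\<^sub>m (2^n))"

lemma pauli_X1_Z1_in_real_pauli_group:
  "pauli_X1 n \<in> real_pauli_group (Suc n)" "pauli_Z1 n \<in> real_pauli_group (Suc n)"
  by (simp_all add: kron_mat_in_real_pauli_group one_in_real_pauli_group pauli1_eq)

lemma pauli_X1_Z1_carrier:
  "pauli_X1 n \<in> carrier_mat (2^Suc n) (2^Suc n)" "pauli_Z1 n \<in> carrier_mat (2^Suc n) (2^Suc n)"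
  by (simp_all add: real_pauli_group_carrier pauli_X1_Z1_in_real_pauli_group)

section \<open>Symmetric Pauli matrices\<close>

definition sym_pauli :: "nat \<Rightarrow> real mat set" where
  "sym_pauli n = {P \<in> real_pauli_group n. transpose_mat P = P}"

lemma sym_pauli_transpose_iff:
  assumes Q: "Q \<in> pauli1" and P: "P \<in> real_pauli_group n"
  shows "kron_mat Q P \<in> sym_pauli (Suc n) \<longleftrightarrow> (transpose_mat Q = Q \<longleftrightarrow> transpose_mat P = P)"
proof -
  have "Q \<noteq> - Q" using orth_group_neq_uminus[OF pauli1_orth[OF Q]] by simp
  moreover have "kron_mat Q P \<noteq> - kron_mat Q P"
    using real_pauli_group_neq_uminus[OF kron_mat_in_real_pauli_group[OF Q P]] .
  ultimately show ?thesis
    using pauli1_transpose[OF Q] real_pauli_group_transpose[OF P] real_pauli_group_neq_uminus[OF P]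
      kron_mat_in_real_pauli_group[OF Q P]
    unfolding sym_pauli_def
    by (auto simp: transpose_kron_mat kron_mat_uminus_left kron_mat_uminus_right dest: sym)
qed

lemma sym_pauli_Suc:
  "sym_pauli (Suc n) = (\<lambda>(Q,P). kron_mat Q P) `
     ({1\<^sub>m 2, pauli_X, pauli_Z} \<times> sym_pauli n \<union> {pauli_Y} \<times> (real_pauli_group n - sym_pauli n))"
    (is "_ = _ ` ?D")
proof -
  have "kron_mat Q P \<in> sym_pauli (Suc n) \<longleftrightarrow> (Q, P) \<in> ?D" if "Q \<in> pauli1" "P \<in> real_pauli_group n" for Q P
    using sym_pauli_transpose_iff[OF that] that transpose_pauli_Y_neq transpose_pauli pauli1_distinct
    unfolding pauli1_eq sym_pauli_def by auto
  moreover have "sym_pauli (Suc n) \<subseteq> real_pauli_group (Suc n)" "?D \<subseteq> pauli1 \<times> real_pauli_group n"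
    unfolding sym_pauli_def pauli1_eq by auto
  ultimately show ?thesis unfolding real_pauli_group_Suc by (auto 4 3)
qed

lemma card_sym_pauli: "card (sym_pauli n) = 4^n + 2^n"
proof (induction n)
  case 0
  have "(1\<^sub>m 1 :: real mat) \<noteq> - 1\<^sub>m 1" using orth_group_neq_uminus[of "1\<^sub>m 1" 1] by (simp add: orth_group_def)
  moreover have "sym_pauli 0 = {1\<^sub>m 1, - 1\<^sub>m 1}"
    unfolding sym_pauli_def real_pauli_group_0 by (auto simp: transpose_uminus)
  ultimately show ?case by simp
next
  case (Suc n)
  let ?S = "sym_pauli n" and ?P = "real_pauli_group n"
  have S: "?S \<subseteq> ?P" "finite ?S" using finite_real_pauli_group unfolding sym_pauli_def by auto
  have dom: "{1\<^sub>m 2, pauli_X, pauli_Z} \<times> ?S \<union> {pauli_Y} \<times> (?P - ?S) \<subseteq> pauli1 \<times> ?P"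
    using S unfolding pauli1_eq by auto
  have "card (sym_pauli (Suc n)) = card ({1\<^sub>m 2, pauli_X, pauli_Z} \<times> ?S \<union> {pauli_Y} \<times> (?P - ?S))"
    unfolding sym_pauli_Suc by (rule card_image[OF inj_on_subset[OF inj_on_kron_mat_pauli dom]])
  also have "\<dots> = 3 * card ?S + card (?P - ?S)"
    using pauli1_distinct S finite_real_pauli_group
    by (subst card_Un_disjoint) (auto simp: card_cartesian_product)
  also have "card (?P - ?S) = 2 * 4^n - (4^n + 2^n)"
    using S Suc.IH by (simp add: card_Diff_subset card_real_pauli_group)
  finally show ?case using Suc.IH power_mono[of "2::nat" 4 n] by simp
qed

lemma pauli_X1_Z1_sym: "pauli_X1 n \<in> sym_pauli (Suc n)" "pauli_Z1 n \<in> sym_pauli (Suc n)"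
  using sym_pauli_transpose_iff[of _ "1\<^sub>m (2^n)" n] transpose_pauli
  by (simp_all add: pauli1_eq one_in_real_pauli_group)

lemma real_clifford_group_iff:
  "U \<in> real_clifford_group n \<longleftrightarrow>
   U \<in> orth_group (2^n) \<and> (\<forall>P\<in>real_pauli_group n. U * P * transpose_mat U \<in> real_pauli_group n)"
  unfolding real_clifford_group_def by simp

lemma real_clifford_group_orth: "U \<in> real_clifford_group n \<Longrightarrow> U \<in> orth_group (2^n)"
  by (simp add: real_clifford_group_iff)

lemma real_clifford_group_carrier: "U \<in> real_clifford_group n \<Longrightarrow> U \<in> carrier_mat (2^n) (2^n)"
  using real_clifford_group_orth orth_groupD(1) by blast

lemma real_clifford_group_conj:
  "U \<in> real_clifford_group n \<Longrightarrow> P \<in> real_pauli_group n \<Longrightarrow> U * P * transpose_mat U \<in> real_pauli_group n"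
  by (simp add: real_clifford_group_iff)

lemma real_clifford_group_mult:
  assumes U: "U \<in> real_clifford_group n" and V: "V \<in> real_clifford_group n"
  shows "U * V \<in> real_clifford_group n"
  unfolding real_clifford_group_iff
proof safe
  show "U * V \<in> orth_group (2^n)" using U V by (simp add: orth_group_mult real_clifford_group_orth)
  fix P assume "P \<in> real_pauli_group n"
  then show "U * V * P * transpose_mat (U * V) \<in> real_pauli_group n"
    using conj_conj_mat[OF real_clifford_group_carrier[OF U] real_clifford_group_carrier[OF V] real_pauli_group_carrier]
      real_clifford_group_conj[OF U real_clifford_group_conj[OF V]] by simp
qed

lemma real_clifford_group_transpose:
  assumes U: "U \<in> real_clifford_group n"
  shows "transpose_mat U \<in> real_clifford_group n"
  unfolding real_clifford_group_iff
proof safe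
  have orth: "U \<in> orth_group (2^n)" using U by (rule real_clifford_group_orth)
  then show "transpose_mat U \<in> orth_group (2^n)" by (rule orth_group_transpose)
  let ?conj = "\<lambda>A. U * A * transpose_mat U"
  have onto: "?conj ` real_pauli_group n = real_pauli_group n"
  proof (rule endo_inj_surj[OF finite_real_pauli_group])
    show "?conj ` real_pauli_group n \<subseteq> real_pauli_group n"
      by (auto intro: real_clifford_group_conj[OF U])
    show "inj_on ?conj (real_pauli_group n)"
      using inj_on_conj_mat[OF orth] by (rule inj_on_subset) (auto intro: real_pauli_group_carrier)
  qed
  fix P assume "P \<in> real_pauli_group n"
  then have "P \<in> ?conj ` real_pauli_group n" by (simp only: onto)
  then obtain Q where Q: "Q \<in> real_pauli_group n" and P: "P = ?conj Q" by (rule imageE)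
  show "transpose_mat U * P * transpose_mat (transpose_mat U) \<in> real_pauli_group n"
    unfolding P transpose_transpose using conj_mat_cancel[OF orth real_pauli_group_carrier[OF Q]] Q by simp
qed

text \<open>Every Pauli matrix on \<open>n + 1\<close> qubits is a signed product of \<open>X\<^sub>1\<close>, \<open>Z\<^sub>1\<close> and some \<open>I \<otimes> R\<close>,
  so an orthogonal matrix is Clifford as soon as it maps these to Pauli matrices.\<close>

lemma real_clifford_group_SucI:
  assumes U: "U \<in> orth_group (2^Suc n)"
    and X: "U * pauli_X1 n * transpose_mat U \<in> real_pauli_group (Suc n)"
    and Z: "U * pauli_Z1 n * transpose_mat U \<in> real_pauli_group (Suc n)"
    and I: "\<And>R. R \<in> real_pauli_group n \<Longrightarrow> U * kron_mat (1\<^sub>m 2) R * transpose_mat U \<in> real_pauli_group (Suc n)"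
  shows "U \<in> real_clifford_group (Suc n)"
proof -
  let ?conj = "\<lambda>A. U * A * transpose_mat U"
  have conj_mult: "?conj (A * B) = ?conj A * ?conj B"
    if "A \<in> carrier_mat (2^Suc n) (2^Suc n)" "B \<in> carrier_mat (2^Suc n) (2^Suc n)" for A B
    using conj_mat_mult[OF U that] by simp
  have first_qubit: "?conj (kron_mat Q (1\<^sub>m (2^n))) \<in> real_pauli_group (Suc n)" if "Q \<in> pauli1" for Q
  proof -
    have "kron_mat pauli_Y (1\<^sub>m (2^n)) = pauli_X1 n * pauli_Z1 n"
      by (simp add: kron_mat_mult[where N = "2^n"] pauli_mult)
    then have "?conj (kron_mat pauli_Y (1\<^sub>m (2^n))) \<in> real_pauli_group (Suc n)"
      using conj_mult pauli_X1_Z1_carrier X Z real_pauli_group_mult by simp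
    moreover have "?conj (kron_mat (1\<^sub>m 2) (1\<^sub>m (2^n))) \<in> real_pauli_group (Suc n)"
      using conj_mat_one[OF U] one_in_real_pauli_group[of "Suc n"] by (simp add: kron_mat_one)
    ultimately show ?thesis using that X Z unfolding pauli1_eq by auto
  qed
  have "?conj M \<in> real_pauli_group (Suc n)" if M: "M \<in> real_pauli_group (Suc n)" for M
  proof -
    obtain Q R where Q: "Q \<in> pauli1" and R: "R \<in> real_pauli_group n" and M: "M = kron_mat Q R"
      using M by (elim real_pauli_group_SucE)
    have Qc: "Q \<in> carrier_mat 2 2" and Rc: "R \<in> carrier_mat (2^n) (2^n)"
      using Q R by (auto simp: pauli1_carrier real_pauli_group_carrier)
    have "M = kron_mat Q (1\<^sub>m (2^n)) * kron_mat (1\<^sub>m 2) R"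
      unfolding M using Qc Rc by (simp add: kron_mat_mult[where N = "2^n"])
    then show ?thesis using conj_mult Qc Rc first_qubit[OF Q] I[OF R] real_pauli_group_mult by simp
  qed
  then show ?thesis using U by (simp add: real_clifford_group_iff)
qed

section \<open>Clifford gates\<close>

lemma mult_four_block_square:
  assumes "A \<in> carrier_mat N N" "B \<in> carrier_mat N N" "C \<in> carrier_mat N N" "D \<in> carrier_mat N N"
    "A' \<in> carrier_mat N N" "B' \<in> carrier_mat N N" "C' \<in> carrier_mat N N" "D' \<in> carrier_mat N N"
  shows "four_block_mat A B C D * four_block_mat A' B' C' D'
    = four_block_mat (A * A' + B * C') (A * B' + B * D') (C * A' + D * C') (C * B' + D * D')"
  by (rule mult_four_block_mat) (use assms in auto)

definition controlled_mat :: "nat \<Rightarrow> real mat \<Rightarrow> real mat" where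
  "controlled_mat N P = four_block_mat (1\<^sub>m N) (0\<^sub>m N N) (0\<^sub>m N N) P"

lemma transpose_controlled_mat:
  "P \<in> carrier_mat N N \<Longrightarrow> transpose_mat (controlled_mat N P) = controlled_mat N (transpose_mat P)"
  unfolding controlled_mat_def by (subst transpose_four_block_mat) auto

lemma controlled_mat_orth:
  assumes "P \<in> orth_group N"
  shows "controlled_mat N P \<in> orth_group (N + N)"
proof -
  have P: "P \<in> carrier_mat N N" "transpose_mat P * P = 1\<^sub>m N" using assms by (auto dest: orth_groupD)
  have "transpose_mat (controlled_mat N P) * controlled_mat N P = controlled_mat N (transpose_mat P * P)"
    unfolding transpose_controlled_mat[OF P(1)] unfolding controlled_mat_def
    by (subst mult_four_block_square) (use P(1) in auto)
  then show ?thesis using P by (simp add: orth_group_def controlled_mat_def)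
qed

lemma conj_controlled_mat:
  assumes "P \<in> carrier_mat N N"
    and "A \<in> carrier_mat N N" "B \<in> carrier_mat N N" "C \<in> carrier_mat N N" "D \<in> carrier_mat N N"
  shows "controlled_mat N P * four_block_mat A B C D * transpose_mat (controlled_mat N P)
    = four_block_mat A (B * transpose_mat P) (P * C) (P * D * transpose_mat P)"
  unfolding transpose_controlled_mat[OF assms(1)] unfolding controlled_mat_def
  using assms by (simp add: mult_four_block_square[where N = N] square_mat_simps[where N = N])

lemma conj_controlled_pauli:
  assumes P: "P \<in> real_pauli_group n" and R: "R \<in> real_pauli_group n"
  shows "controlled_mat (2^n) P * kron_mat (1\<^sub>m 2) R * transpose_mat (controlled_mat (2^n) P)
      = (if P * R = R * P then kron_mat (1\<^sub>m 2) R else kron_mat pauli_Z R)"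
    and "controlled_mat (2^n) P * kron_mat pauli_Z R * transpose_mat (controlled_mat (2^n) P)
      = (if P * R = R * P then kron_mat pauli_Z R else kron_mat (1\<^sub>m 2) R)"
proof -
  have c: "P \<in> carrier_mat (2^n) (2^n)" "R \<in> carrier_mat (2^n) (2^n)"
    using P R by (auto simp: real_pauli_group_carrier)
  note blocks = kron_mat_pauli_four_block[OF c(2)]
  note PRP = real_pauli_group_conj[OF P R]
  show "controlled_mat (2^n) P * kron_mat (1\<^sub>m 2) R * transpose_mat (controlled_mat (2^n) P)
      = (if P * R = R * P then kron_mat (1\<^sub>m 2) R else kron_mat pauli_Z R)"
    unfolding blocks conj_controlled_mat[OF c(1) c(2) zero_carrier_mat zero_carrier_mat c(2)]
    using c PRP by simp
  show "controlled_mat (2^n) P * kron_mat pauli_Z R * transpose_mat (controlled_mat (2^n) P)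
      = (if P * R = R * P then kron_mat pauli_Z R else kron_mat (1\<^sub>m 2) R)"
    unfolding blocks conj_controlled_mat[OF c(1) c(2) zero_carrier_mat zero_carrier_mat uminus_carrier_iff_mat[THEN iffD2, OF c(2)]]
    using c PRP by (simp add: conj_mat_uminus[OF c(1) c(2)])
qed

lemma conj_controlled_pauli_X1:
  assumes P: "P \<in> real_pauli_group n"
  shows "controlled_mat (2^n) P * pauli_X1 n * transpose_mat (controlled_mat (2^n) P)
    = (if transpose_mat P = P then kron_mat pauli_X P else kron_mat pauli_Y P)"
proof -
  have c: "P \<in> carrier_mat (2^n) (2^n)" using P by (rule real_pauli_group_carrier)
  have "controlled_mat (2^n) P * pauli_X1 n * transpose_mat (controlled_mat (2^n) P)
      = four_block_mat (0\<^sub>m (2^n) (2^n)) (transpose_mat P) P (0\<^sub>m (2^n) (2^n))"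
    unfolding kron_mat_pauli_four_block(2)[OF one_carrier_mat]
    using c by (subst conj_controlled_mat) auto
  then show ?thesis
    using real_pauli_group_transpose[OF P] kron_mat_pauli_four_block(2,4)[OF c] by auto
qed

lemma controlled_pauli_fixes_Z1:
  assumes "P \<in> real_pauli_group n"
  shows "controlled_mat (2^n) P * pauli_Z1 n * transpose_mat (controlled_mat (2^n) P) = pauli_Z1 n"
  using conj_controlled_pauli(2)[OF assms one_in_real_pauli_group] real_pauli_group_carrier[OF assms] by simp

lemma controlled_pauli_in_real_clifford_group:
  assumes P: "P \<in> real_pauli_group n"
  shows "controlled_mat (2^n) P \<in> real_clifford_group (Suc n)"
proof (rule real_clifford_group_SucI)
  show "controlled_mat (2^n) P \<in> orth_group (2^Suc n)"
    using controlled_mat_orth[OF real_pauli_group_orth[OF P]] by (simp add: mult_2)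
  show "controlled_mat (2^n) P * pauli_X1 n * transpose_mat (controlled_mat (2^n) P) \<in> real_pauli_group (Suc n)"
    unfolding conj_controlled_pauli_X1[OF P] using P by (simp add: kron_mat_in_real_pauli_group pauli1_eq)
  show "controlled_mat (2^n) P * pauli_Z1 n * transpose_mat (controlled_mat (2^n) P) \<in> real_pauli_group (Suc n)"
    using controlled_pauli_fixes_Z1[OF P] by (simp add: pauli_X1_Z1_in_real_pauli_group)
  fix R assume R: "R \<in> real_pauli_group n"
  show "controlled_mat (2^n) P * kron_mat (1\<^sub>m 2) R * transpose_mat (controlled_mat (2^n) P) \<in> real_pauli_group (Suc n)"
    unfolding conj_controlled_pauli(1)[OF P R] using R by (simp add: kron_mat_in_real_pauli_group pauli1_eq)
qed

definition hadamard :: "real mat" where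
  "hadamard = mat 2 2 (\<lambda>(i,j). if i = 1 \<and> j = 1 then - 1 / sqrt 2 else 1 / sqrt 2)"

lemma hadamard_carrier: "hadamard \<in> carrier_mat 2 2"
  by (simp add: hadamard_def)

lemma transpose_hadamard: "transpose_mat hadamard = hadamard"
  unfolding hadamard_def by (rule eq_matI) auto

lemma hadamard_orth: "hadamard \<in> orth_group 2"
  unfolding orth_group_def transpose_hadamard unfolding hadamard_def
  by (auto intro!: eq_matI dest!: less_2_cases simp: scalar_prod_def sum_atLeast0_lessThan_2)

lemma hadamard_conj_pauli:
  "hadamard * pauli_X * transpose_mat hadamard = pauli_Z"
  "hadamard * pauli_Z * transpose_mat hadamard = pauli_X"
  unfolding transpose_hadamard unfolding hadamard_def pauli_mats
  by (auto intro!: eq_matI dest!: less_2_cases simp: scalar_prod_def sum_atLeast0_lessThan_2)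

abbreviation hadamard1 :: "nat \<Rightarrow> real mat" where
  "hadamard1 n \<equiv> kron_mat hadamard (1\<^sub>m (2^n))"

lemma conj_hadamard1:
  assumes "Q \<in> carrier_mat 2 2" "R \<in> carrier_mat (2^n) (2^n)"
  shows "hadamard1 n * kron_mat Q R * transpose_mat (hadamard1 n)
    = kron_mat (hadamard * Q * transpose_mat hadamard) R"
  using conj_kron_mat[OF hadamard_carrier assms(1) one_carrier_mat assms(2)] assms(2) by simp

lemma hadamard1_in_real_clifford_group: "hadamard1 n \<in> real_clifford_group (Suc n)"
proof (rule real_clifford_group_SucI)
  show "hadamard1 n \<in> orth_group (2^Suc n)"
    using kron_mat_orth[OF hadamard_orth, of "1\<^sub>m (2^n)"] by (simp add: orth_group_def)
  show "hadamard1 n * pauli_X1 n * transpose_mat (hadamard1 n) \<in> real_pauli_group (Suc n)"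
    "hadamard1 n * pauli_Z1 n * transpose_mat (hadamard1 n) \<in> real_pauli_group (Suc n)"
    by (simp_all add: conj_hadamard1 hadamard_conj_pauli pauli_X1_Z1_in_real_pauli_group)
  fix R assume "R \<in> real_pauli_group n"
  then show "hadamard1 n * kron_mat (1\<^sub>m 2) R * transpose_mat (hadamard1 n) \<in> real_pauli_group (Suc n)"
    using conj_mat_one[OF hadamard_orth]
    by (simp add: conj_hadamard1 real_pauli_group_carrier kron_mat_in_real_pauli_group pauli1_eq)
qed

lemma kron_one_real_clifford_group:
  assumes V: "V \<in> real_clifford_group n"
  shows "kron_mat (1\<^sub>m 2) V \<in> real_clifford_group (Suc n)"
    and "kron_mat (1\<^sub>m 2) V * pauli_X1 n * transpose_mat (kron_mat (1\<^sub>m 2) V) = pauli_X1 n"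
    and "kron_mat (1\<^sub>m 2) V * pauli_Z1 n * transpose_mat (kron_mat (1\<^sub>m 2) V) = pauli_Z1 n"
proof -
  have orth: "V \<in> orth_group (2^n)" using V by (rule real_clifford_group_orth)
  have conj: "kron_mat (1\<^sub>m 2) V * kron_mat Q R * transpose_mat (kron_mat (1\<^sub>m 2) V)
      = kron_mat Q (V * R * transpose_mat V)" if "Q \<in> carrier_mat 2 2" "R \<in> carrier_mat (2^n) (2^n)" for Q R
    using conj_kron_mat[OF one_carrier_mat that(1) orth_groupD(1)[OF orth] that(2)] that(1) by simp
  show X: "kron_mat (1\<^sub>m 2) V * pauli_X1 n * transpose_mat (kron_mat (1\<^sub>m 2) V) = pauli_X1 n"
    and Z: "kron_mat (1\<^sub>m 2) V * pauli_Z1 n * transpose_mat (kron_mat (1\<^sub>m 2) V) = pauli_Z1 n"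
    using conj_mat_one[OF orth] by (simp_all add: conj)
  show "kron_mat (1\<^sub>m 2) V \<in> real_clifford_group (Suc n)"
  proof (rule real_clifford_group_SucI)
    show "kron_mat (1\<^sub>m 2) V \<in> orth_group (2^Suc n)"
      using kron_mat_orth[OF _ orth, of "1\<^sub>m 2"] by (simp add: orth_group_def)
    fix R assume "R \<in> real_pauli_group n"
    then show "kron_mat (1\<^sub>m 2) V * kron_mat (1\<^sub>m 2) R * transpose_mat (kron_mat (1\<^sub>m 2) V) \<in> real_pauli_group (Suc n)"
      using V by (simp add: conj real_pauli_group_carrier kron_mat_in_real_pauli_group real_clifford_group_conj pauli1_eq)
  qed (simp_all add: X Z pauli_X1_Z1_in_real_pauli_group)
qed

section \<open>Transitivity on symmetric Pauli matrices\<close>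

lemma conj_Z1_kron_X_or_Y:
  assumes P: "P \<in> real_pauli_group n"
  shows "\<exists>U\<in>real_clifford_group (Suc n). U * pauli_Z1 n * transpose_mat U
    = (if transpose_mat P = P then kron_mat pauli_X P else kron_mat pauli_Y P)"
proof
  let ?U = "controlled_mat (2^n) P * hadamard1 n"
  show "?U \<in> real_clifford_group (Suc n)"
    by (intro real_clifford_group_mult controlled_pauli_in_real_clifford_group[OF P] hadamard1_in_real_clifford_group)
  show "?U * pauli_Z1 n * transpose_mat ?U = (if transpose_mat P = P then kron_mat pauli_X P else kron_mat pauli_Y P)"
    using conj_conj_mat[OF real_clifford_group_carrier[OF controlled_pauli_in_real_clifford_group[OF P]]
        real_clifford_group_carrier[OF hadamard1_in_real_clifford_group] pauli_X1_Z1_carrier(2)]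
    by (simp add: conj_hadamard1 hadamard_conj_pauli conj_controlled_pauli_X1[OF P])
qed

lemma conj_Z1_kron_Z:
  assumes P: "P \<in> sym_pauli n"
  shows "\<exists>U\<in>real_clifford_group (Suc n). U * pauli_Z1 n * transpose_mat U = kron_mat pauli_Z P"
proof -
  have P': "P \<in> real_pauli_group n" "transpose_mat P = P" using P by (auto simp: sym_pauli_def)
  obtain U where U: "U \<in> real_clifford_group (Suc n)" "U * pauli_Z1 n * transpose_mat U = kron_mat pauli_X P"
    using conj_Z1_kron_X_or_Y[OF P'(1)] P'(2) by auto
  have "(hadamard1 n * U) * pauli_Z1 n * transpose_mat (hadamard1 n * U) = kron_mat pauli_Z P"
    using conj_conj_mat[OF real_clifford_group_carrier[OF hadamard1_in_real_clifford_group]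
        real_clifford_group_carrier[OF U(1)] pauli_X1_Z1_carrier(2)] U(2)
    by (simp add: conj_hadamard1 hadamard_conj_pauli real_pauli_group_carrier[OF P'(1)])
  then show ?thesis using real_clifford_group_mult[OF hadamard1_in_real_clifford_group U(1)] by blast
qed

lemma conj_Z1_kron_one:
  assumes P: "P \<in> sym_pauli n" "P \<noteq> 1\<^sub>m (2^n)" "P \<noteq> - 1\<^sub>m (2^n)"
  shows "\<exists>U\<in>real_clifford_group (Suc n). U * pauli_Z1 n * transpose_mat U = kron_mat (1\<^sub>m 2) P"
proof -
  have P': "P \<in> real_pauli_group n" using P by (simp add: sym_pauli_def)
  obtain S where S: "S \<in> real_pauli_group n" "P * S = - (S * P)"
    using real_pauli_group_anticommuting_partner[OF P' P(2,3)] by blast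
  have "S * P \<noteq> P * S"
    using S real_pauli_group_neq_uminus[OF real_pauli_group_mult[OF S(1) P']] by auto
  then have conj_S: "controlled_mat (2^n) S * kron_mat pauli_Z P * transpose_mat (controlled_mat (2^n) S)
      = kron_mat (1\<^sub>m 2) P"
    using conj_controlled_pauli(2)[OF S(1) P'] by simp
  obtain U where U: "U \<in> real_clifford_group (Suc n)" "U * pauli_Z1 n * transpose_mat U = kron_mat pauli_Z P"
    using conj_Z1_kron_Z[OF P(1)] by blast
  let ?W = "controlled_mat (2^n) S * U"
  have "?W * pauli_Z1 n * transpose_mat ?W = kron_mat (1\<^sub>m 2) P"
    using conj_conj_mat[OF real_clifford_group_carrier[OF controlled_pauli_in_real_clifford_group[OF S(1)]]
        real_clifford_group_carrier[OF U(1)] pauli_X1_Z1_carrier(2)] U(2) conj_S by simp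
  then show ?thesis
    using real_clifford_group_mult[OF controlled_pauli_in_real_clifford_group[OF S(1)] U(1)] by blast
qed

lemma conj_Z1_onto_sym_pauli:
  assumes A: "A \<in> sym_pauli (Suc n)" "A \<noteq> 1\<^sub>m (2^Suc n)" "A \<noteq> - 1\<^sub>m (2^Suc n)"
  shows "\<exists>U\<in>real_clifford_group (Suc n). U * pauli_Z1 n * transpose_mat U = A"
proof -
  obtain Q P where Q: "Q \<in> pauli1" and P: "P \<in> real_pauli_group n" and AQ: "A = kron_mat Q P"
    using A(1) unfolding sym_pauli_def by (auto elim: real_pauli_group_SucE)
  have sym_iff: "transpose_mat Q = Q \<longleftrightarrow> transpose_mat P = P"
    using A(1) sym_pauli_transpose_iff[OF Q P] AQ by simp
  consider "Q = 1\<^sub>m 2" | "Q = pauli_X" | "Q = pauli_Z" | "Q = pauli_Y" using Q unfolding pauli1_eq by blast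
  then show ?thesis
  proof cases
    case 1
    then have "P \<noteq> 1\<^sub>m (2^n)" "P \<noteq> - 1\<^sub>m (2^n)"
      using A(2,3) AQ by (auto simp: kron_mat_one kron_mat_uminus_right)
    then show ?thesis using conj_Z1_kron_one[of P n] sym_iff P AQ 1 by (simp add: sym_pauli_def)
  next
    case 2
    then show ?thesis using conj_Z1_kron_X_or_Y[OF P] sym_iff AQ transpose_pauli by simp
  next
    case 3
    then show ?thesis using conj_Z1_kron_Z[of P n] sym_iff P AQ transpose_pauli by (simp add: sym_pauli_def)
  next
    case 4
    then show ?thesis using conj_Z1_kron_X_or_Y[OF P] sym_iff AQ transpose_pauli_Y_neq by simp
  qed
qed

section \<open>Symmetric Pauli matrices anticommuting with a given one\<close>

definition anticommuting_sym_pauli :: "nat \<Rightarrow> real mat \<Rightarrow> real mat set" where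
  "anticommuting_sym_pauli n A = {B \<in> sym_pauli n. A * B = - (B * A)}"

lemma finite_anticommuting_sym_pauli: "finite (anticommuting_sym_pauli n A)"
  by (rule finite_subset[OF _ finite_real_pauli_group[of n]])
    (auto simp: anticommuting_sym_pauli_def sym_pauli_def)

lemma conj_sym_pauli:
  assumes "U \<in> real_clifford_group n" "B \<in> sym_pauli n"
  shows "U * B * transpose_mat U \<in> sym_pauli n"
  using assms transpose_conj_mat[OF real_clifford_group_carrier[OF assms(1)] real_pauli_group_carrier]
  by (simp add: sym_pauli_def real_clifford_group_conj)

lemma conj_anticommuting_sym_pauli:
  assumes U: "U \<in> real_clifford_group n" and A: "A \<in> real_pauli_group n"
    and B: "B \<in> anticommuting_sym_pauli n A"
  shows "U * B * transpose_mat U \<in> anticommuting_sym_pauli n (U * A * transpose_mat U)"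
proof -
  have orth: "U \<in> orth_group (2^n)" using U by (rule real_clifford_group_orth)
  have Bs: "B \<in> sym_pauli n" and AB: "A * B = - (B * A)" using B by (auto simp: anticommuting_sym_pauli_def)
  have c: "A \<in> carrier_mat (2^n) (2^n)" "B \<in> carrier_mat (2^n) (2^n)"
    using A Bs by (auto simp: real_pauli_group_carrier sym_pauli_def)
  have "(U * A * transpose_mat U) * (U * B * transpose_mat U) = U * (- (B * A)) * transpose_mat U"
    using conj_mat_mult[OF orth c] AB by simp
  also have "\<dots> = - (U * (B * A) * transpose_mat U)"
    using conj_mat_uminus[OF orth_groupD(1)[OF orth] mult_carrier_mat[OF c(2) c(1)]] .
  also have "U * (B * A) * transpose_mat U = (U * B * transpose_mat U) * (U * A * transpose_mat U)"
    using conj_mat_mult[OF orth c(2) c(1)] by simp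
  finally show ?thesis using conj_sym_pauli[OF U Bs] by (simp add: anticommuting_sym_pauli_def)
qed

lemma pauli_X1_anticommuting_Z1: "pauli_X1 n \<in> anticommuting_sym_pauli (Suc n) (pauli_Z1 n)"
proof -
  have "pauli_Z1 n * pauli_X1 n = - (pauli_X1 n * pauli_Z1 n)"
    by (simp add: kron_mat_mult[where N = "2^n"] pauli_mult kron_mat_uminus_left)
  then show ?thesis using pauli_X1_Z1_sym(1) by (simp add: anticommuting_sym_pauli_def)
qed

lemma anticommuting_sym_pauli_Z1:
  "anticommuting_sym_pauli (Suc n) (pauli_Z1 n)
    = (\<lambda>P. controlled_mat (2^n) P * pauli_X1 n * transpose_mat (controlled_mat (2^n) P)) ` real_pauli_group n"
proof (intro equalityI subsetI)
  fix B assume B: "B \<in> anticommuting_sym_pauli (Suc n) (pauli_Z1 n)"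
  then have Bs: "B \<in> sym_pauli (Suc n)" and anti: "pauli_Z1 n * B = - (B * pauli_Z1 n)"
    by (auto simp: anticommuting_sym_pauli_def)
  obtain Q P where Q: "Q \<in> pauli1" and P: "P \<in> real_pauli_group n" and BQ: "B = kron_mat Q P"
    using Bs unfolding sym_pauli_def by (auto elim: real_pauli_group_SucE)
  have Pc: "P \<in> carrier_mat (2^n) (2^n)" using P by (rule real_pauli_group_carrier)
  have "kron_mat (pauli_Z * Q) P = - kron_mat (Q * pauli_Z) P"
    using anti pauli1_carrier[OF Q] Pc unfolding BQ by (simp add: kron_mat_mult[where N = "2^n"])
  then have "Q = pauli_X \<or> Q = pauli_Y"
    using Q real_pauli_group_neq_uminus[OF kron_mat_in_real_pauli_group[OF _ P]]
    by (auto simp: pauli1_eq pauli_mult)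
  moreover have "transpose_mat Q = Q \<longleftrightarrow> transpose_mat P = P"
    using Bs sym_pauli_transpose_iff[OF Q P] BQ by simp
  ultimately have "B = (if transpose_mat P = P then kron_mat pauli_X P else kron_mat pauli_Y P)"
    using BQ transpose_pauli transpose_pauli_Y_neq by auto
  then have "B = controlled_mat (2^n) P * pauli_X1 n * transpose_mat (controlled_mat (2^n) P)"
    using conj_controlled_pauli_X1[OF P] by simp
  then show "B \<in> (\<lambda>P. controlled_mat (2^n) P * pauli_X1 n * transpose_mat (controlled_mat (2^n) P)) ` real_pauli_group n"
    using P by blast
next
  fix B assume "B \<in> (\<lambda>P. controlled_mat (2^n) P * pauli_X1 n * transpose_mat (controlled_mat (2^n) P)) ` real_pauli_group n"
  then obtain P where P: "P \<in> real_pauli_group n"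
    and B: "B = controlled_mat (2^n) P * pauli_X1 n * transpose_mat (controlled_mat (2^n) P)" by blast
  show "B \<in> anticommuting_sym_pauli (Suc n) (pauli_Z1 n)"
    using conj_anticommuting_sym_pauli[OF controlled_pauli_in_real_clifford_group[OF P]
        pauli_X1_Z1_in_real_pauli_group(2) pauli_X1_anticommuting_Z1]
    unfolding B controlled_pauli_fixes_Z1[OF P] .
qed

lemma card_anticommuting_sym_pauli_Z1: "card (anticommuting_sym_pauli (Suc n) (pauli_Z1 n)) = 2 * 4^n"
proof -
  have "inj_on (\<lambda>P. if transpose_mat P = P then kron_mat pauli_X P else kron_mat pauli_Y P) (real_pauli_group n)"
  proof (rule inj_onI)
    fix P P' assume P: "P \<in> real_pauli_group n" and P': "P' \<in> real_pauli_group n"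
      and eq: "(if transpose_mat P = P then kron_mat pauli_X P else kron_mat pauli_Y P)
        = (if transpose_mat P' = P' then kron_mat pauli_X P' else kron_mat pauli_Y P')"
    have XY: "pauli_X \<in> pauli1" "pauli_Y \<in> pauli1" by (simp_all add: pauli1_eq)
    from eq obtain Q Q' where "Q \<in> pauli1" "Q' \<in> pauli1" "kron_mat Q P = kron_mat Q' P'"
      using XY by (auto split: if_splits)
    then show "P = P'" using kron_mat_pauli_inj[OF _ _ P real_pauli_group_carrier[OF P']] by blast
  qed
  then have "inj_on (\<lambda>P. controlled_mat (2^n) P * pauli_X1 n * transpose_mat (controlled_mat (2^n) P)) (real_pauli_group n)"
    by (rule inj_on_cong[THEN iffD1, rotated]) (simp add: conj_controlled_pauli_X1)
  then show ?thesis
    unfolding anticommuting_sym_pauli_Z1 by (simp add: card_image card_real_pauli_group)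
qed

lemma card_anticommuting_sym_pauli_conj:
  assumes U: "U \<in> real_clifford_group n" and A: "A \<in> real_pauli_group n"
  shows "card (anticommuting_sym_pauli n (U * A * transpose_mat U)) = card (anticommuting_sym_pauli n A)"
proof -
  have orth: "U \<in> orth_group (2^n)" using U by (rule real_clifford_group_orth)
  let ?conj = "\<lambda>B. U * B * transpose_mat U"
  have "?conj ` anticommuting_sym_pauli n A = anticommuting_sym_pauli n (?conj A)"
  proof (intro equalityI subsetI)
    fix B assume "B \<in> ?conj ` anticommuting_sym_pauli n A"
    then show "B \<in> anticommuting_sym_pauli n (?conj A)" using conj_anticommuting_sym_pauli[OF U A] by blast
  next
    fix B assume B: "B \<in> anticommuting_sym_pauli n (?conj A)"
    have UT: "transpose_mat U \<in> real_clifford_group n" using U by (rule real_clifford_group_transpose)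
    have Bc: "B \<in> carrier_mat (2^n) (2^n)"
      using B by (auto simp: anticommuting_sym_pauli_def sym_pauli_def real_pauli_group_carrier)
    have "transpose_mat U * B * U \<in> anticommuting_sym_pauli n A"
      using conj_anticommuting_sym_pauli[OF UT real_clifford_group_conj[OF U A] B]
        conj_mat_cancel[OF orth real_pauli_group_carrier[OF A]] by simp
    moreover have "B = ?conj (transpose_mat U * B * U)"
      using conj_mat_cancel[OF orth_group_transpose[OF orth] Bc] by simp
    ultimately show "B \<in> ?conj ` anticommuting_sym_pauli n A" by blast
  qed
  moreover have "inj_on ?conj (anticommuting_sym_pauli n A)"
    by (rule inj_on_subset[OF inj_on_conj_mat[OF orth]])
      (auto simp: anticommuting_sym_pauli_def sym_pauli_def real_pauli_group_carrier)
  ultimately show ?thesis by (metis card_image)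
qed

lemma card_anticommuting_sym_pauli:
  assumes "A \<in> sym_pauli (Suc n)" "A \<noteq> 1\<^sub>m (2^Suc n)" "A \<noteq> - 1\<^sub>m (2^Suc n)"
  shows "card (anticommuting_sym_pauli (Suc n) A) = 2 * 4^n"
proof -
  obtain U where "U \<in> real_clifford_group (Suc n)" "U * pauli_Z1 n * transpose_mat U = A"
    using conj_Z1_onto_sym_pauli[OF assms] by blast
  then show ?thesis
    using card_anticommuting_sym_pauli_conj[OF _ pauli_X1_Z1_in_real_pauli_group(2)] card_anticommuting_sym_pauli_Z1
    by metis
qed

section \<open>The stabiliser of \<open>Z\<^sub>1\<close> and \<open>X\<^sub>1\<close>\<close>

lemma four_block_mat_square_inj:
  assumes c: "A \<in> carrier_mat N N" "B \<in> carrier_mat N N" "C \<in> carrier_mat N N" "D \<in> carrier_mat N N"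
    "A' \<in> carrier_mat N N" "B' \<in> carrier_mat N N" "C' \<in> carrier_mat N N" "D' \<in> carrier_mat N N"
    and eq: "four_block_mat A B C D = four_block_mat A' B' C' D'"
  shows "A = A' \<and> B = B' \<and> C = C' \<and> D = D'"
proof -
  have ix: "four_block_mat A B C D $$ (i, j) = four_block_mat A' B' C' D' $$ (i, j)" for i j
    using eq by simp
  have "A = A'"
  proof (rule eq_matI)
    fix i j assume "i < dim_row A'" "j < dim_col A'"
    then show "A $$ (i, j) = A' $$ (i, j)" using ix[of i j] c by auto
  qed (use c in auto)
  moreover have "B = B'"
  proof (rule eq_matI)
    fix i j assume "i < dim_row B'" "j < dim_col B'"
    then show "B $$ (i, j) = B' $$ (i, j)" using ix[of i "j + N"] c by auto
  qed (use c in auto)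
  moreover have "C = C'"
  proof (rule eq_matI)
    fix i j assume "i < dim_row C'" "j < dim_col C'"
    then show "C $$ (i, j) = C' $$ (i, j)" using ix[of "i + N" j] c by auto
  qed (use c in auto)
  moreover have "D = D'"
  proof (rule eq_matI)
    fix i j assume "i < dim_row D'" "j < dim_col D'"
    then show "D $$ (i, j) = D' $$ (i, j)" using ix[of "i + N" "j + N"] c by auto
  qed (use c in auto)
  ultimately show ?thesis by simp
qed

lemma eq_uminus_imp_zero_mat:
  assumes "(B :: real mat) = - B" "B \<in> carrier_mat N M"
  shows "B = 0\<^sub>m N M"
proof (rule eq_matI)
  fix i j assume ij: "i < dim_row (0\<^sub>m N M :: real mat)" "j < dim_col (0\<^sub>m N M :: real mat)"
  have "B $$ (i, j) = (- B) $$ (i, j)" using assms(1) by simp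
  then show "B $$ (i, j) = 0\<^sub>m N M $$ (i, j)" using ij assms(2) by simp
qed (use assms(2) in auto)

lemma block_diagonal_if_commute_Z_X:
  fixes U :: "real mat"
  assumes U: "U \<in> carrier_mat (N + N) (N + N)"
    and Z: "U * four_block_mat (1\<^sub>m N) (0\<^sub>m N N) (0\<^sub>m N N) (- 1\<^sub>m N)
      = four_block_mat (1\<^sub>m N) (0\<^sub>m N N) (0\<^sub>m N N) (- 1\<^sub>m N) * U"
    and X: "U * four_block_mat (0\<^sub>m N N) (1\<^sub>m N) (1\<^sub>m N) (0\<^sub>m N N)
      = four_block_mat (0\<^sub>m N N) (1\<^sub>m N) (1\<^sub>m N) (0\<^sub>m N N) * U"
  shows "\<exists>A\<in>carrier_mat N N. U = four_block_mat A (0\<^sub>m N N) (0\<^sub>m N N) A"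
proof -
  obtain A B C D where "split_block U N N = (A, B, C, D)" by (metis prod_cases4)
  from split_block[OF this, of N N] U have c: "A \<in> carrier_mat N N" "B \<in> carrier_mat N N" "C \<in> carrier_mat N N" "D \<in> carrier_mat N N"
    and UA: "U = four_block_mat A B C D" by auto
  have "U * four_block_mat (1\<^sub>m N) (0\<^sub>m N N) (0\<^sub>m N N) (- 1\<^sub>m N) = four_block_mat A (- B) C (- D)"
    unfolding UA using c by (subst mult_four_block_square) (auto simp: square_mat_simps[where N = N])
  moreover have "four_block_mat (1\<^sub>m N) (0\<^sub>m N N) (0\<^sub>m N N) (- 1\<^sub>m N) * U = four_block_mat A B (- C) (- D)"
    unfolding UA using c by (subst mult_four_block_square) (auto simp: square_mat_simps[where N = N])
  ultimately have "four_block_mat A (- B) C (- D) = four_block_mat A B (- C) (- D)" using Z by simp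
  then have "B = - B" "C = - C"
    using four_block_mat_square_inj[of A N "- B" C "- D" A B "- C" "- D"] c by auto
  then have B0: "B = 0\<^sub>m N N" and C0: "C = 0\<^sub>m N N" using c eq_uminus_imp_zero_mat by blast+
  have "U * four_block_mat (0\<^sub>m N N) (1\<^sub>m N) (1\<^sub>m N) (0\<^sub>m N N) = four_block_mat B A D C"
    unfolding UA using c by (subst mult_four_block_square) (auto simp: square_mat_simps[where N = N])
  moreover have "four_block_mat (0\<^sub>m N N) (1\<^sub>m N) (1\<^sub>m N) (0\<^sub>m N N) * U = four_block_mat C D A B"
    unfolding UA using c by (subst mult_four_block_square) (auto simp: square_mat_simps[where N = N])
  ultimately have "four_block_mat B A D C = four_block_mat C D A B" using X by simp
  then have "A = D" using four_block_mat_square_inj[of B N A D C C D A B] c by blast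
  then show ?thesis using UA B0 C0 c(1) by blast
qed

lemma real_clifford_group_of_kron_one:
  assumes U: "kron_mat (1\<^sub>m 2) V \<in> real_clifford_group (Suc n)" and Vc: "V \<in> carrier_mat (2^n) (2^n)"
  shows "V \<in> real_clifford_group n"
proof -
  have orth: "kron_mat (1\<^sub>m 2) V \<in> orth_group (2^Suc n)" using U by (rule real_clifford_group_orth)
  have I: "1\<^sub>m 2 \<in> pauli1" by (simp add: pauli1_eq)
  have "kron_mat (1\<^sub>m 2) (transpose_mat V * V) = kron_mat (1\<^sub>m 2) (1\<^sub>m (2^n))"
    using orth_groupD(2)[OF orth] Vc unfolding transpose_kron_mat
    by (simp add: kron_mat_mult[where N = "2^n"] kron_mat_one)
  then have "V \<in> orth_group (2^n)"
    using kron_mat_pauli1_cancel_left[OF I, of "transpose_mat V * V" "2^n" "1\<^sub>m (2^n)"] Vc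
    by (simp add: orth_group_def)
  moreover have "V * R * transpose_mat V \<in> real_pauli_group n" if R: "R \<in> real_pauli_group n" for R
  proof -
    have "kron_mat (1\<^sub>m 2) (V * R * transpose_mat V) \<in> real_pauli_group (Suc n)"
      using real_clifford_group_conj[OF U kron_mat_in_real_pauli_group[OF I R]]
        conj_kron_mat[OF one_carrier_mat one_carrier_mat Vc real_pauli_group_carrier[OF R]] by simp
    then obtain Q' R' where "Q' \<in> pauli1" "R' \<in> real_pauli_group n"
      "kron_mat Q' R' = kron_mat (1\<^sub>m 2) (V * R * transpose_mat V)"
      by (elim real_pauli_group_SucE) auto
    then show ?thesis
      using kron_mat_pauli_inj[OF _ I, of Q' R' n "V * R * transpose_mat V"] Vc real_pauli_group_carrier[OF R]
      by auto
  qed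
  ultimately show ?thesis by (simp add: real_clifford_group_iff)
qed

lemma real_clifford_group_fixing_Z1_X1:
  assumes U: "U \<in> real_clifford_group (Suc n)"
    and Z: "U * pauli_Z1 n * transpose_mat U = pauli_Z1 n" and X: "U * pauli_X1 n * transpose_mat U = pauli_X1 n"
  shows "\<exists>V\<in>real_clifford_group n. U = kron_mat (1\<^sub>m 2) V"
proof -
  have orth: "U \<in> orth_group (2^Suc n)" using U by (rule real_clifford_group_orth)
  have "U * pauli_Z1 n = pauli_Z1 n * U" "U * pauli_X1 n = pauli_X1 n * U"
    using commute_if_conj_mat_fixed[OF orth pauli_X1_Z1_carrier(2) Z]
      commute_if_conj_mat_fixed[OF orth pauli_X1_Z1_carrier(1) X] by auto
  moreover have "U \<in> carrier_mat (2^n + 2^n) (2^n + 2^n)" using orth_groupD(1)[OF orth] by (simp add: mult_2)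
  ultimately obtain V where Vc: "V \<in> carrier_mat (2^n) (2^n)"
    and "U = four_block_mat V (0\<^sub>m (2^n) (2^n)) (0\<^sub>m (2^n) (2^n)) V"
    using block_diagonal_if_commute_Z_X[of U "2^n"] kron_mat_pauli_four_block(2,3)[OF one_carrier_mat] by auto
  then have UV: "U = kron_mat (1\<^sub>m 2) V" using kron_mat_pauli_four_block(1)[OF Vc] by simp
  then show ?thesis using real_clifford_group_of_kron_one[of V n] U Vc by blast
qed

section \<open>Counting\<close>

lemma card_eq_card_image_mult:
  assumes "finite (f ` A)"
    and "\<And>a. a \<in> A \<Longrightarrow> finite {x \<in> A. f x = f a} \<and> card {x \<in> A. f x = f a} = k"
  shows "finite A \<and> card A = card (f ` A) * k"
proof -
  have fibre: "finite {x \<in> A. f x = b} \<and> card {x \<in> A. f x = b} = k" if "b \<in> f ` A" for b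
    using that assms(2) by blast
  have A: "A = (\<Union>b\<in>f ` A. {x \<in> A. f x = b})" by blast
  have "finite (\<Union>b\<in>f ` A. {x \<in> A. f x = b})" using assms(1) fibre by blast
  moreover have "card (\<Union>b\<in>f ` A. {x \<in> A. f x = b}) = (\<Sum>b\<in>f ` A. card {x \<in> A. f x = b})"
    using assms(1) fibre by (intro card_UN_disjoint) auto
  ultimately show ?thesis using fibre A by simp
qed

definition conj_Z1_X1 :: "nat \<Rightarrow> real mat \<Rightarrow> real mat \<times> real mat" where
  "conj_Z1_X1 n U = (U * pauli_Z1 n * transpose_mat U, U * pauli_X1 n * transpose_mat U)"

lemma conj_Z1_X1_mem:
  assumes U: "U \<in> real_clifford_group (Suc n)"
  shows "conj_Z1_X1 n U
    \<in> Sigma (sym_pauli (Suc n) - {1\<^sub>m (2^Suc n), - 1\<^sub>m (2^Suc n)}) (anticommuting_sym_pauli (Suc n))"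
proof -
  let ?A = "U * pauli_Z1 n * transpose_mat U" and ?B = "U * pauli_X1 n * transpose_mat U"
  have B: "?B \<in> anticommuting_sym_pauli (Suc n) ?A"
    using conj_anticommuting_sym_pauli[OF U pauli_X1_Z1_in_real_pauli_group(2) pauli_X1_anticommuting_Z1] .
  then have Bp: "?B \<in> real_pauli_group (Suc n)" and anti: "?A * ?B = - (?B * ?A)"
    by (auto simp: anticommuting_sym_pauli_def sym_pauli_def)
  have Uc: "U \<in> carrier_mat (2^Suc n) (2^Suc n)" using U by (rule real_clifford_group_carrier)
  have "?A \<noteq> 1\<^sub>m (2^Suc n)"
  proof
    assume "?A = 1\<^sub>m (2^Suc n)"
    then have "?B = - ?B" using Uc anti by simp
    then show False using real_pauli_group_neq_uminus[OF Bp] by simp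
  qed
  moreover have "?A \<noteq> - 1\<^sub>m (2^Suc n)"
  proof
    assume "?A = - 1\<^sub>m (2^Suc n)"
    then have "- ?B = ?B" using Uc anti by simp
    then show False using real_pauli_group_neq_uminus[OF Bp] by simp
  qed
  ultimately show ?thesis using conj_sym_pauli[OF U pauli_X1_Z1_sym(2)] B unfolding conj_Z1_X1_def by simp
qed

lemma conj_Z1_X1_surj:
  assumes A: "A \<in> sym_pauli (Suc n)" "A \<noteq> 1\<^sub>m (2^Suc n)" "A \<noteq> - 1\<^sub>m (2^Suc n)"
    and B: "B \<in> anticommuting_sym_pauli (Suc n) A"
  shows "(A, B) \<in> conj_Z1_X1 n ` real_clifford_group (Suc n)"
proof -
  obtain U where U: "U \<in> real_clifford_group (Suc n)" and UA: "U * pauli_Z1 n * transpose_mat U = A"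
    using conj_Z1_onto_sym_pauli[OF A] by blast
  have orth: "U \<in> orth_group (2^Suc n)" using U by (rule real_clifford_group_orth)
  have UT: "transpose_mat U \<in> real_clifford_group (Suc n)" using U by (rule real_clifford_group_transpose)
  have "transpose_mat U * A * transpose_mat (transpose_mat U) = pauli_Z1 n"
    unfolding UA[symmetric] using conj_mat_cancel[OF orth pauli_X1_Z1_carrier(2)] by simp
  then have "transpose_mat U * B * U \<in> anticommuting_sym_pauli (Suc n) (pauli_Z1 n)"
    using conj_anticommuting_sym_pauli[OF UT _ B] A(1) by (simp add: sym_pauli_def)
  then obtain P where B0: "transpose_mat U * B * U
      = controlled_mat (2^n) P * pauli_X1 n * transpose_mat (controlled_mat (2^n) P)"
    and P: "P \<in> real_pauli_group n"
    unfolding anticommuting_sym_pauli_Z1 by (rule imageE)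
  let ?C = "controlled_mat (2^n) P"
  have C: "?C \<in> real_clifford_group (Suc n)" using P by (rule controlled_pauli_in_real_clifford_group)
  have Bc: "B \<in> carrier_mat (2^Suc n) (2^Suc n)"
    using B real_pauli_group_carrier[of B "Suc n"] by (auto simp: anticommuting_sym_pauli_def sym_pauli_def)
  have "(U * ?C) * pauli_Z1 n * transpose_mat (U * ?C) = A"
    using conj_conj_mat[OF real_clifford_group_carrier[OF U] real_clifford_group_carrier[OF C] pauli_X1_Z1_carrier(2)]
    by (simp add: controlled_pauli_fixes_Z1[OF P] UA)
  moreover have "(U * ?C) * pauli_X1 n * transpose_mat (U * ?C) = B"
    using conj_conj_mat[OF real_clifford_group_carrier[OF U] real_clifford_group_carrier[OF C] pauli_X1_Z1_carrier(1)]
      conj_mat_cancel[OF orth_group_transpose[OF orth] Bc]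
    by (simp add: B0[symmetric])
  ultimately have "(A, B) = conj_Z1_X1 n (U * ?C)" unfolding conj_Z1_X1_def by simp
  then show ?thesis using real_clifford_group_mult[OF U C] by (rule image_eqI)
qed

lemma conj_Z1_X1_image:
  "conj_Z1_X1 n ` real_clifford_group (Suc n)
    = Sigma (sym_pauli (Suc n) - {1\<^sub>m (2^Suc n), - 1\<^sub>m (2^Suc n)}) (anticommuting_sym_pauli (Suc n))"
  using conj_Z1_X1_mem conj_Z1_X1_surj by fastforce

lemma conj_Z1_X1_fibre:
  assumes U0: "U0 \<in> real_clifford_group (Suc n)"
  shows "{U \<in> real_clifford_group (Suc n). conj_Z1_X1 n U = conj_Z1_X1 n U0}
    = (\<lambda>V. U0 * kron_mat (1\<^sub>m 2) V) ` real_clifford_group n"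
proof (intro equalityI subsetI)
  fix U assume "U \<in> {U \<in> real_clifford_group (Suc n). conj_Z1_X1 n U = conj_Z1_X1 n U0}"
  then have U: "U \<in> real_clifford_group (Suc n)"
    and eq: "U * pauli_Z1 n * transpose_mat U = U0 * pauli_Z1 n * transpose_mat U0"
      "U * pauli_X1 n * transpose_mat U = U0 * pauli_X1 n * transpose_mat U0"
    by (auto simp: conj_Z1_X1_def)
  have orth: "U0 \<in> orth_group (2^Suc n)" using U0 by (rule real_clifford_group_orth)
  have U0T: "transpose_mat U0 \<in> real_clifford_group (Suc n)" using U0 by (rule real_clifford_group_transpose)
  let ?W = "transpose_mat U0 * U"
  have "?W * M * transpose_mat ?W = M"
    if "M \<in> carrier_mat (2^Suc n) (2^Suc n)" "U * M * transpose_mat U = U0 * M * transpose_mat U0" for M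
    using conj_conj_mat[OF real_clifford_group_carrier[OF U0T] real_clifford_group_carrier[OF U] that(1)]
      conj_mat_cancel[OF orth that(1)] that(2) by simp
  then obtain V where V: "V \<in> real_clifford_group n" and W: "?W = kron_mat (1\<^sub>m 2) V"
    using real_clifford_group_fixing_Z1_X1[OF real_clifford_group_mult[OF U0T U]] eq pauli_X1_Z1_carrier by metis
  have "U0 * ?W = U"
    using orth_group_mult_transpose[OF orth] orth_groupD(1)[OF orth] real_clifford_group_carrier[OF U]
    by (simp flip: assoc_mult_square[where N = "2^Suc n"])
  then show "U \<in> (\<lambda>V. U0 * kron_mat (1\<^sub>m 2) V) ` real_clifford_group n" using V W by auto
next
  fix U assume "U \<in> (\<lambda>V. U0 * kron_mat (1\<^sub>m 2) V) ` real_clifford_group n"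
  then obtain V where V: "V \<in> real_clifford_group n" and U: "U = U0 * kron_mat (1\<^sub>m 2) V" by blast
  note K = kron_one_real_clifford_group[OF V]
  have "conj_Z1_X1 n U = conj_Z1_X1 n U0"
    unfolding conj_Z1_X1_def U
    using conj_conj_mat[OF real_clifford_group_carrier[OF U0] real_clifford_group_carrier[OF K(1)] pauli_X1_Z1_carrier(1)]
      conj_conj_mat[OF real_clifford_group_carrier[OF U0] real_clifford_group_carrier[OF K(1)] pauli_X1_Z1_carrier(2)]
      K(2,3) by simp
  then show "U \<in> {U \<in> real_clifford_group (Suc n). conj_Z1_X1 n U = conj_Z1_X1 n U0}"
    using real_clifford_group_mult[OF U0 K(1)] U by simp
qed

lemma inj_on_mult_kron_one:
  assumes U0: "U0 \<in> real_clifford_group (Suc n)"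
  shows "inj_on (\<lambda>V. U0 * kron_mat (1\<^sub>m 2) V) (real_clifford_group n)"
proof (rule inj_onI)
  fix V V' assume V: "V \<in> real_clifford_group n" and V': "V' \<in> real_clifford_group n"
    and eq: "U0 * kron_mat (1\<^sub>m 2) V = U0 * kron_mat (1\<^sub>m 2) V'"
  have orth: "U0 \<in> orth_group (2^Suc n)" using U0 by (rule real_clifford_group_orth)
  have cancel: "transpose_mat U0 * (U0 * K) = K" if "K \<in> carrier_mat (2^Suc n) (2^Suc n)" for K
    using orth_groupD[OF orth] that by (simp flip: assoc_mult_square[where N = "2^Suc n"])
  have "kron_mat (1\<^sub>m 2) V = kron_mat (1\<^sub>m 2) V'"
    using cancel[OF real_clifford_group_carrier[OF kron_one_real_clifford_group(1)[OF V]]]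
      cancel[OF real_clifford_group_carrier[OF kron_one_real_clifford_group(1)[OF V']]] eq by metis
  then show "V = V'"
    using kron_mat_pauli1_cancel_left[of "1\<^sub>m 2" V "2^n" V'] real_clifford_group_carrier[OF V]
      real_clifford_group_carrier[OF V'] by (simp add: pauli1_eq)
qed

lemma card_conj_Z1_X1_image:
  "card (conj_Z1_X1 n ` real_clifford_group (Suc n)) = (4^Suc n + 2^Suc n - 2) * (2 * 4^n)"
    and finite_conj_Z1_X1_image: "finite (conj_Z1_X1 n ` real_clifford_group (Suc n))"
proof -
  let ?S = "sym_pauli (Suc n) - {1\<^sub>m (2^Suc n), - 1\<^sub>m (2^Suc n)}"
  have S: "finite (sym_pauli (Suc n))" using finite_real_pauli_group unfolding sym_pauli_def by auto
  have signs: "1\<^sub>m (2^Suc n) \<in> sym_pauli (Suc n)" "- 1\<^sub>m (2^Suc n) \<in> sym_pauli (Suc n)"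
    "(1\<^sub>m (2^Suc n) :: real mat) \<noteq> - 1\<^sub>m (2^Suc n)"
    using one_in_real_pauli_group[of "Suc n"] real_pauli_group_uminus[OF one_in_real_pauli_group[of "Suc n"]]
      real_pauli_group_neq_uminus[OF one_in_real_pauli_group[of "Suc n"]]
    by (auto simp: sym_pauli_def transpose_uminus)
  have "card (Sigma ?S (anticommuting_sym_pauli (Suc n))) = (\<Sum>A\<in>?S. card (anticommuting_sym_pauli (Suc n) A))"
    using S finite_anticommuting_sym_pauli by (intro card_SigmaI) auto
  also have "\<dots> = card ?S * (2 * 4^n)" by (simp add: card_anticommuting_sym_pauli)
  also have "card ?S = 4^Suc n + 2^Suc n - 2"
    using S signs card_sym_pauli[of "Suc n"] by (simp add: card_Diff_subset)
  finally show "card (conj_Z1_X1 n ` real_clifford_group (Suc n)) = (4^Suc n + 2^Suc n - 2) * (2 * 4^n)"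
    unfolding conj_Z1_X1_image .
  show "finite (conj_Z1_X1 n ` real_clifford_group (Suc n))"
    unfolding conj_Z1_X1_image using S finite_anticommuting_sym_pauli by auto
qed

lemma card_real_clifford_group_Suc:
  assumes fin: "finite (real_clifford_group n)"
  shows "finite (real_clifford_group (Suc n))"
    and "card (real_clifford_group (Suc n)) = (4^Suc n + 2^Suc n - 2) * (2 * 4^n) * card (real_clifford_group n)"
proof -
  have "finite {U \<in> real_clifford_group (Suc n). conj_Z1_X1 n U = conj_Z1_X1 n U0}
      \<and> card {U \<in> real_clifford_group (Suc n). conj_Z1_X1 n U = conj_Z1_X1 n U0} = card (real_clifford_group n)"
    if "U0 \<in> real_clifford_group (Suc n)" for U0
    unfolding conj_Z1_X1_fibre[OF that] using fin card_image[OF inj_on_mult_kron_one[OF that]] by simp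
  with finite_conj_Z1_X1_image
  have "finite (real_clifford_group (Suc n))
      \<and> card (real_clifford_group (Suc n)) = card (conj_Z1_X1 n ` real_clifford_group (Suc n)) * card (real_clifford_group n)"
    by (rule card_eq_card_image_mult)
  then show "finite (real_clifford_group (Suc n))"
    and "card (real_clifford_group (Suc n)) = (4^Suc n + 2^Suc n - 2) * (2 * 4^n) * card (real_clifford_group n)"
    unfolding card_conj_Z1_X1_image by simp_all
qed

lemma real_clifford_group_0: "real_clifford_group 0 = {1\<^sub>m 1, - 1\<^sub>m 1}"
proof (intro equalityI subsetI)
  fix U assume U: "U \<in> real_clifford_group 0"
  have Uc: "U \<in> carrier_mat 1 1" using real_clifford_group_carrier[OF U] by simp
  have "(transpose_mat U * U) $$ (0, 0) = (1\<^sub>m 1 :: real mat) $$ (0, 0)"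
    using orth_groupD(2)[OF real_clifford_group_orth[OF U]] by simp
  then have "U $$ (0, 0) * U $$ (0, 0) = 1" using Uc by (simp add: scalar_prod_def)
  then have "U $$ (0, 0) = 1 \<or> U $$ (0, 0) = -1" by (simp add: square_eq_1_iff)
  then show "U \<in> {1\<^sub>m 1, - 1\<^sub>m 1}" using Uc by (auto intro!: eq_matI)
next
  fix U assume "U \<in> {1\<^sub>m 1, - 1\<^sub>m 1 :: real mat}"
  then show "U \<in> real_clifford_group 0"
    by (auto simp: real_clifford_group_iff orth_group_def real_pauli_group_0 transpose_uminus)
qed

theorem real_clifford_group_finite_card:
  "finite (real_clifford_group n) \<and>
   card (real_clifford_group n) = 2 * (\<Prod>i = 1..n. (4^i + 2^i - 2) * (2 * 4^(i - 1)))"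
proof (induction n)
  case 0
  have "(1\<^sub>m 1 :: real mat) \<noteq> - 1\<^sub>m 1"
    using real_pauli_group_neq_uminus[OF one_in_real_pauli_group[of 0]] by simp
  then show ?case by (simp add: real_clifford_group_0)
next
  case (Suc n)
  then show ?case using card_real_clifford_group_Suc[of n] by (simp add: mult_ac)
qed

theorem corollary4p16:
  fixes n :: nat
  shows "card (real_clifford_group n) =
    2 * (\<Prod>i = 1..n. (4^i + 2^i - 2) * (2 * 4^(i - 1)))"
  using real_clifford_group_finite_card by blast

end
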